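(* Let $\mathcal M$ be a mixture of $L$ Markov chains on $n$ states such that $s^\ell_j>0$ for all $\ell,j$, the matrices $P_j$ and $M^+_j$ have rank $L$ for all $j$, $\mathcal M$ is companion-connected, and the co-kernel of $\mathcal A=\mathcal A(P_1,\dots,P_n,Q_1,\dots,Q_n)$ is spanned by the indicator vectors $\xi^\ell_C$ ($\ell\in[L]$, $C\in\mathcal C^\ell$). Let $P'_j,Q'_j$, $\mathcal A'$ and $Y'_j,Z'_j\in\mathbb R^{r\times L}$ be as defined in the context (for an arbitrary choice of basis of the co-kernel of $\mathcal A'$). Then for any states $i,j\in[n]$: $\Xi_i=\Xi_j$ (i.e. $i$ and $j$ lie in the same connected component in every chain) if and only if the $r\times r$ matrix $(Z'_j\overline{Y'_j})^\dagger(Z'_i\overline{Y'_i})$ has rank $L$ and is the Moore–Penrose pseudoinverse of $(Z'_i\overline{Y'_i})^\dagger(Z'_j\overline{Y'_j})$.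
   Context: A mixture of $L$ Markov chains on $[n]$: row-stochastic $M^1,\dots,M^L\in\mathbb R^{n\times n}$ and starting vectors $s^\ell\in\mathbb R^n_{\ge0}$ with $\sum_{\ell,i}s^\ell_i=1$; 3-trail distribution $p(i,j,k)=\sum_\ell s^\ell_iM^\ell_{ij}M^\ell_{jk}$; $O_j\in\mathbb R^{n\times n}$, $O_j(i,k)=p(i,j,k)$. $P_j,Q_j,M^+_j\in\mathbb R^{L\times n}$: $P_j(\ell,i)=s^\ell_iM^\ell_{ij}$, $Q_j(\ell,k)=s^\ell_jM^\ell_{jk}$, $M^+_j(\ell,k)=M^\ell_{jk}$. $\overline A$ denotes the transpose, $A^\dagger$ the pseudoinverse. Shuffle matrix $\mathcal A(P_1,\dots,P_n,Q_1,\dots,Q_n)\in\mathbb R^{2Ln\times n^2}$: rows indexed by $(j,\ell,\pm)\in[n]\times[L]\times\{+,-\}$, columns by $(i,j)\in[n]^2$, with $\mathcal A_{(j,\ell,+),(i,j)}=P_j(\ell,i)$, $\mathcal A_{(i,\ell,-),(i,j)}=-Q_i(\ell,j)$, all other entries $0$. Its co-kernel is $\{v\in\mathbb R^{2Ln}:v^\top\mathcal A=0\}$; write $v^\ell_{j^\pm}=v_{(j,\ell,\pm)}$. Graphs: $G^\ell$ is the bipartite graph on $V^\pm=\{1^\pm,\dots,n^\pm\}$ with an edge $\{i^-,j^+\}$ whenever $M^\ell_{ij}>0$; $\mathcal C^\ell$ its connected components; $r=\sum_\ell|\mathcal C^\ell|$. Indicator $\xi^\ell_C\in\mathbb R^{2Ln}$: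 $(\xi^\ell_C)^{\ell'}_x=1$ iff $\ell'=\ell$ and $x\in C$. Companion-connected: for each $j$ there is $i\ne j$ such that for every $\ell$, $j^-$ and $i^-$ lie in the same component of $G^\ell$ as $j^+$. Enumerate all components as $q=1,\dots,r$; $\Xi_j\in\{0,1\}^{r\times L}$ has $\Xi_j(q,\ell)=1$ iff the $q$-th component belongs to $\mathcal C^\ell$ and contains $j^+$ (equivalently $j^-$). Estimated factors: for each $j$, $O_j$ has rank $L$; let $O_j=\overline{U_j}\Sigma_jV_j$ be a compact singular value decomposition with $U_j,V_j\in\mathbb R^{L\times n}$ having orthonormal rows and $\Sigma_j\in\mathbb R^{L\times L}$ diagonal positive; set $P'_j=U_j$, $Q'_j=\Sigma_jV_j$, and $\mathcal A'=\mathcal A(P'_1,\dots,P'_n,Q'_1,\dots,Q'_n)$. Let the rows of a matrix $B\in\mathbb R^{r\times 2Ln}$ be a basis of the co-kernel of $\mathcal A'$ (which has dimension $r$ under the hypotheses), and write $B=(Y'_1,\dots,Y'_n,Z'_1,\dots,Z'_n)$ where $Y'_j\in\mathbb R^{r\times L}$ consists of the columns of $B$ indexed by $(j,\ell,+)$, $\ell\in[L]$, and $Z'_j\in\mathbb R^{r\times L}$ of those indexed by $(j,\ell,-)$, $\ell\in[L]$. *)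

theory Defs
  imports "Jordan_Normal_Form.DL_Rank"
begin

(* Conventions: states are 0..n-1, chains are 0..L-1.
   M l i j = M^l_{ij},  s l i = s^l_i. *)

definition mrank :: "real mat \<Rightarrow> nat" where
  "mrank A = vec_space.rank (dim_row A) A"

(* Moore-Penrose pseudoinverse, via the Penrose conditions (unique solution) *)
definition is_pinv :: "real mat \<Rightarrow> real mat \<Rightarrow> bool" where
  "is_pinv A X \<longleftrightarrow> X \<in> carrier_mat (dim_col A) (dim_row A) \<and>
     A * X * A = A \<and> X * A * X = X \<and>
     transpose_mat (A * X) = A * X \<and> transpose_mat (X * A) = X * A"

definition pinv :: "real mat \<Rightarrow> real mat" where
  "pinv A = (THE X. is_pinv A X)"

definition mixture :: "nat \<Rightarrow> nat \<Rightarrow> (nat \<Rightarrow> nat \<Rightarrow> nat \<Rightarrow> real) \<Rightarrow> (nat \<Rightarrow> nat \<Rightarrow> real) \<Rightarrow> bool" where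
  "mixture n L M s \<longleftrightarrow>
     (\<forall>l<L. \<forall>i<n. \<forall>j<n. M l i j \<ge> 0) \<and>
     (\<forall>l<L. \<forall>i<n. (\<Sum>j<n. M l i j) = 1) \<and>
     (\<forall>l<L. \<forall>i<n. s l i \<ge> 0) \<and>
     (\<Sum>l<L. \<Sum>i<n. s l i) = 1"

definition Pmat :: "nat \<Rightarrow> nat \<Rightarrow> (nat \<Rightarrow> nat \<Rightarrow> nat \<Rightarrow> real) \<Rightarrow> (nat \<Rightarrow> nat \<Rightarrow> real) \<Rightarrow> nat \<Rightarrow> real mat" where
  "Pmat n L M s j = mat L n (\<lambda>(l, i). s l i * M l i j)"

definition Qmat :: "nat \<Rightarrow> nat \<Rightarrow> (nat \<Rightarrow> nat \<Rightarrow> nat \<Rightarrow> real) \<Rightarrow> (nat \<Rightarrow> nat \<Rightarrow> real) \<Rightarrow> nat \<Rightarrow> real mat" where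
  "Qmat n L M s j = mat L n (\<lambda>(l, k). s l j * M l j k)"

definition Mplus :: "nat \<Rightarrow> nat \<Rightarrow> (nat \<Rightarrow> nat \<Rightarrow> nat \<Rightarrow> real) \<Rightarrow> nat \<Rightarrow> real mat" where
  "Mplus n L M j = mat L n (\<lambda>(l, k). M l j k)"

definition Omat :: "nat \<Rightarrow> nat \<Rightarrow> (nat \<Rightarrow> nat \<Rightarrow> nat \<Rightarrow> real) \<Rightarrow> (nat \<Rightarrow> nat \<Rightarrow> real) \<Rightarrow> nat \<Rightarrow> real mat" where
  "Omat n L M s j = mat n n (\<lambda>(i, k). \<Sum>l<L. s l i * M l i j * M l j k)"

(* Index encodings (0-based):
   row (j,l,+) of the shuffle matrix  ~>  j*L + l
   row (j,l,-)                        ~>  L*n + j*L + l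
   column (i,j)                       ~>  i*n + j *)
definition row_idx :: "nat \<Rightarrow> nat \<Rightarrow> nat \<Rightarrow> nat \<Rightarrow> bool \<Rightarrow> nat" where
  "row_idx n L j l pos = (if pos then j * L + l else L * n + j * L + l)"

definition shuffle :: "nat \<Rightarrow> nat \<Rightarrow> (nat \<Rightarrow> real mat) \<Rightarrow> (nat \<Rightarrow> real mat) \<Rightarrow> real mat" where
  "shuffle n L P Q = mat (2 * L * n) (n * n) (\<lambda>(k, c).
     (let i = c div n; j = c mod n in
      if k < L * n then
        (if k div L = j then P j $$ (k mod L, i) else 0)
      else
        (if (k - L * n) div L = i then - (Q i $$ ((k - L * n) mod L, j)) else 0)))"

definition cokernel :: "real mat \<Rightarrow> real vec set" where
  "cokernel A = {v \<in> carrier_vec (dim_row A). transpose_mat A *\<^sub>v v = 0\<^sub>v (dim_col A)}"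

(* Bipartite graph G^l on V^- and V^+: vertex (i, False) = i^-, (i, True) = i^+;
   edge {i^-, j^+} iff M^l_{ij} > 0 *)
definition gedge :: "nat \<Rightarrow> (nat \<Rightarrow> nat \<Rightarrow> nat \<Rightarrow> real) \<Rightarrow> nat \<Rightarrow> nat \<times> bool \<Rightarrow> nat \<times> bool \<Rightarrow> bool" where
  "gedge n M l x y \<longleftrightarrow> fst x < n \<and> fst y < n \<and>
     ((\<not> snd x \<and> snd y \<and> M l (fst x) (fst y) > 0) \<or>
      (\<not> snd y \<and> snd x \<and> M l (fst y) (fst x) > 0))"

definition gconn :: "nat \<Rightarrow> (nat \<Rightarrow> nat \<Rightarrow> nat \<Rightarrow> real) \<Rightarrow> nat \<Rightarrow> nat \<times> bool \<Rightarrow> nat \<times> bool \<Rightarrow> bool" where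
  "gconn n M l x y = (gedge n M l)\<^sup>*\<^sup>* x y"

definition gverts :: "nat \<Rightarrow> (nat \<times> bool) set" where
  "gverts n = {x. fst x < n}"

definition comps :: "nat \<Rightarrow> (nat \<Rightarrow> nat \<Rightarrow> nat \<Rightarrow> real) \<Rightarrow> nat \<Rightarrow> (nat \<times> bool) set set" where
  "comps n M l = (\<lambda>x. {y \<in> gverts n. gconn n M l x y}) ` gverts n"

definition num_comps :: "nat \<Rightarrow> nat \<Rightarrow> (nat \<Rightarrow> nat \<Rightarrow> nat \<Rightarrow> real) \<Rightarrow> nat" where
  "num_comps n L M = (\<Sum>l<L. card (comps n M l))"

definition xi :: "nat \<Rightarrow> nat \<Rightarrow> nat \<Rightarrow> (nat \<times> bool) set \<Rightarrow> real vec" where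
  "xi n L l C = vec (2 * L * n) (\<lambda>k.
      if k < L * n then (if k mod L = l \<and> (k div L, True) \<in> C then 1 else 0)
      else (if (k - L * n) mod L = l \<and> ((k - L * n) div L, False) \<in> C then 1 else 0))"

definition xi_span :: "nat \<Rightarrow> nat \<Rightarrow> (nat \<Rightarrow> nat \<Rightarrow> nat \<Rightarrow> real) \<Rightarrow> real vec set" where
  "xi_span n L M = {vec (2 * L * n) (\<lambda>k. \<Sum>p\<in>S. c p * xi n L (fst p) (snd p) $ k) | S c.
      S \<subseteq> {(l, C). l < L \<and> C \<in> comps n M l}}"

definition companion_connected :: "nat \<Rightarrow> nat \<Rightarrow> (nat \<Rightarrow> nat \<Rightarrow> nat \<Rightarrow> real) \<Rightarrow> bool" where
  "companion_connected n L M \<longleftrightarrow>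
     (\<forall>j<n. \<exists>i<n. i \<noteq> j \<and> (\<forall>l<L.
        gconn n M l (j, False) (j, True) \<and> gconn n M l (i, False) (j, True)))"

definition compact_svd :: "nat \<Rightarrow> nat \<Rightarrow> real mat \<Rightarrow> real mat \<Rightarrow> real mat \<Rightarrow> real mat \<Rightarrow> bool" where
  "compact_svd n L Om U S V \<longleftrightarrow>
     U \<in> carrier_mat L n \<and> V \<in> carrier_mat L n \<and> S \<in> carrier_mat L L \<and>
     U * transpose_mat U = 1\<^sub>m L \<and> V * transpose_mat V = 1\<^sub>m L \<and>
     (\<forall>a<L. \<forall>b<L. a \<noteq> b \<longrightarrow> S $$ (a, b) = 0) \<and> (\<forall>a<L. S $$ (a, a) > 0) \<and>
     Om = transpose_mat U * S * V"

(* Y'_j and Z'_j: the r x L blocks of columns (j,l,+) resp. (j,l,-) of B *)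
definition Yblk :: "nat \<Rightarrow> nat \<Rightarrow> real mat \<Rightarrow> nat \<Rightarrow> real mat" where
  "Yblk n L B j = mat (dim_row B) L (\<lambda>(q, l). B $$ (q, row_idx n L j l True))"

definition Zblk :: "nat \<Rightarrow> nat \<Rightarrow> real mat \<Rightarrow> nat \<Rightarrow> real mat" where
  "Zblk n L B j = mat (dim_row B) L (\<lambda>(q, l). B $$ (q, row_idx n L j l False))"

end

(*
  Write Delta_j = diag(s^l_j). Since P_j and M^+_j have rank L and O_j = P_j^T M^+_j, the factors of
  the compact SVD are the true ones up to a change of basis: U_j = X_j P_j and Sigma_j V_j = Y_j M^+_j
  with X_j^T Y_j = I. Transporting a row of B along these changes of basis turns a co-kernel vector
  of A' into one of A, i.e. into a combination of the indicators xi^l_C. Collecting the coefficients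
  in an r x r matrix R, and using companion-connectedness to identify the components of j^+ and j^-,
  gives Z'_j Y'_j^T = F_j Delta_j F_j^T with F_j = R Xi_j. Here R is invertible, because
  B = R G has rank r, and Xi_j^T Xi_j = I, so F_j has full column rank L.

  For such sandwiches the pseudoinverse is explicit: pinv (F D F^T) = F H D^-1 H F^T with
  H = (F^T F)^-1. If F_i = F_j the rank and pseudoinverse identities follow by computation.
  Conversely they force F_j^T F_i to be invertible and then F_j^T F_i H_i F_i^T F_j = F_j^T F_j,
  so F_j lies in the column space of F_i; thus Xi_j = Xi_i W, which for these 0/1 matrices means
  that i^+ and j^+ share their component in every chain.
*)
theory Submission
  imports Defs
begin

section \<open>Matrix identities and rank\<close>

lemma assoc_mult_mat_dim:
  "dim_col A = dim_row B \<Longrightarrow> dim_col B = dim_row C \<Longrightarrow>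
    (A :: 'a :: comm_ring_1 mat) * B * C = A * (B * C)"
  by (rule assoc_mult_mat[of _ "dim_row A" "dim_col A" _ "dim_col B" _ "dim_col C"]) auto

lemma transpose_mult_mat_dim:
  "dim_col A = dim_row B \<Longrightarrow>
    transpose_mat ((A :: 'a :: comm_ring_1 mat) * B) = transpose_mat B * transpose_mat A"
  by (rule transpose_mult[of _ "dim_row A" "dim_col A" _ "dim_col B"]) auto

lemma mult_mat_inverse_cancel:
  assumes "A * B = 1\<^sub>m k" "dim_col A = dim_row B" "dim_row Z = dim_col B"
  shows "(A :: 'a :: comm_ring_1 mat) * (B * Z) = Z"
proof -
  have "dim_col B = k" using arg_cong[OF assms(1), of dim_col] by simp
  then show ?thesis
    using assms by (simp add: assoc_mult_mat_dim[symmetric])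
qed

lemma mult_mat_inverse_cancel3:
  assumes "A * (B * C) = 1\<^sub>m k" "dim_col A = dim_row B" "dim_col B = dim_row C" "dim_row Z = dim_col C"
  shows "(A :: 'a :: comm_ring_1 mat) * (B * (C * Z)) = Z"
proof -
  have "A * (B * (C * Z)) = A * (B * C) * Z"
    using assms by (simp add: assoc_mult_mat_dim[symmetric] del: assoc_mult_mat)
  moreover have "dim_col C = k" using arg_cong[OF assms(1), of dim_col] by simp
  ultimately show ?thesis using assms by simp
qed

lemma mult_mat_vec_zero[simp]:
  "dim_col A = nc \<Longrightarrow> (A :: 'a :: comm_ring_1 mat) *\<^sub>v 0\<^sub>v nc = 0\<^sub>v (dim_row A)"
  by (intro eq_vecI) auto

lemma mat_diag_inverse:
  "(\<And>a. a < k \<Longrightarrow> f a \<noteq> 0) \<Longrightarrow> mat_diag k f * mat_diag k (\<lambda>a. 1 / f a) = 1\<^sub>m k"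
  "(\<And>a. a < k \<Longrightarrow> f a \<noteq> 0) \<Longrightarrow> mat_diag k (\<lambda>a. 1 / f a) * mat_diag k f = (1\<^sub>m k :: 'a :: field mat)"
  by (simp_all, auto intro!: eq_matI simp: mat_diag_def)

lemma transpose_mat_diag[simp]: "transpose_mat (mat_diag k f) = mat_diag k f"
  by (auto intro!: eq_matI simp: mat_diag_def)

lemma scalar_prod_self_eq_0:
  assumes w: "(w :: real vec) \<in> carrier_vec k" and z: "w \<bullet> w = 0"
  shows "w = 0\<^sub>v k"
proof -
  have "(\<Sum>i<k. w $ i * w $ i) = 0"
    using z w unfolding scalar_prod_def by (simp add: lessThan_atLeast0)
  then have "\<forall>i\<in>{..<k}. w $ i * w $ i = 0"
    by (subst sum_nonneg_eq_0_iff[symmetric]) auto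
  then show ?thesis using w by (intro eq_vecI) auto
qed

lemma gram_mult_vec_eq_0_imp:
  assumes F: "(F :: real mat) \<in> carrier_mat m k" and v: "v \<in> carrier_vec k"
    and z: "(transpose_mat F * F) *\<^sub>v v = 0\<^sub>v k"
  shows "F *\<^sub>v v = 0\<^sub>v m"
proof -
  have Fv: "F *\<^sub>v v \<in> carrier_vec m" using F v by auto
  have "transpose_mat F *\<^sub>v (F *\<^sub>v v) = 0\<^sub>v k"
    using z F v by (simp add: assoc_mult_mat_vec[of _ k m _ k])
  then have "(F *\<^sub>v v) \<bullet> (F *\<^sub>v v) = 0"
    using transpose_vec_mult_scalar[OF F v Fv] v by simp
  then show ?thesis using scalar_prod_self_eq_0[OF Fv] by simp
qed

lemma inj_imp_invertible_mat:
  assumes A: "(A :: 'a :: field mat) \<in> carrier_mat k k"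
    and inj: "\<And>v. v \<in> carrier_vec k \<Longrightarrow> A *\<^sub>v v = 0\<^sub>v k \<Longrightarrow> v = 0\<^sub>v k"
  obtains B where "B \<in> carrier_mat k k" "A * B = 1\<^sub>m k" "B * A = 1\<^sub>m k"
proof -
  have "det A \<noteq> 0" using det_0_iff_vec_prod_zero_field[OF A] inj by auto
  from det_non_zero_imp_unit[OF A this]
  show ?thesis using that unfolding Units_def ring_mat_def by auto
qed

lemma gram_invertible:
  assumes F: "(F :: real mat) \<in> carrier_mat m k"
    and inj: "\<And>v. v \<in> carrier_vec k \<Longrightarrow> F *\<^sub>v v = 0\<^sub>v m \<Longrightarrow> v = 0\<^sub>v k"
  obtains H where "H \<in> carrier_mat k k"
    "H * (transpose_mat F * F) = 1\<^sub>m k" "(transpose_mat F * F) * H = 1\<^sub>m k"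
  using inj_imp_invertible_mat[of "transpose_mat F * F" k] F inj gram_mult_vec_eq_0_imp
  by (metis mult_carrier_mat transpose_carrier_mat)

lemma transpose_inverse_of_symmetric:
  assumes H: "H \<in> carrier_mat k k" and G: "G \<in> carrier_mat k k"
    and sym: "transpose_mat H = H" and HG: "H * G = 1\<^sub>m k"
  shows "transpose_mat G = (G :: 'a :: comm_ring_1 mat)"
proof -
  have "transpose_mat G = transpose_mat G * (H * G)"
    using HG G by simp
  also have "\<dots> = transpose_mat (H * G) * G"
    using H G sym by (simp add: assoc_mult_mat_dim transpose_mult_mat_dim)
  also have "\<dots> = G" using HG G by simp
  finally show ?thesis .
qed

lemma (in vec_space) rank_mult_le:
  assumes A: "A \<in> carrier_mat n k" and B: "B \<in> carrier_mat k m"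
  shows "rank (A * B) \<le> rank A"
proof -
  define W where "W = span (set (cols A))"
  have AB: "A * B \<in> carrier_mat n m" using A B by auto
  have sub: "set (cols (A * B)) \<subseteq> W"
  proof
    fix x assume "x \<in> set (cols (A * B))"
    then have "x \<in> col_space (A * B)" unfolding col_space_def
      using AB cols_dim span_mem by (metis carrier_matD(1))
    then obtain y where y: "y \<in> carrier_vec m" "x = (A * B) *\<^sub>v y"
      using col_space_eq[OF AB] AB by auto
    have "x = A *\<^sub>v (B *\<^sub>v y)" using y A B by (simp add: assoc_mult_mat_vec)
    moreover have "B *\<^sub>v y \<in> carrier_vec k" using B y by auto
    ultimately show "x \<in> W" using col_space_eq[OF A] A unfolding W_def col_space_def by auto
  qed
  have WV: "subspace class_ring W V"
    unfolding W_def using A cols_dim carrier_matD(1) span_is_subspace by metis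
  have "subspace class_ring (span (set (cols (A * B)))) V"
    by (metis AB cols_dim carrier_matD(1) span_is_subspace)
  then have subspace: "subspace class_ring (span (set (cols (A * B)))) (vs W)"
    using nested_subspaces[OF WV] sub span_is_subset WV by (simp add: subspace_def)
  have "vectorspace.fin_dim class_ring (vs W)"
    unfolding W_def using A fin_dim_span_cols by auto
  moreover have "vectorspace.fin_dim class_ring (span_vs (set (cols (A * B))))"
    using AB fin_dim_span_cols by blast
  ultimately show ?thesis unfolding rank_def W_def[symmetric]
    using vectorspace.subspace_dim[OF subspace_is_vs[OF WV] subspace] by auto
qed

lemma (in vec_space) non_distinct_cols_low_rank:
  assumes A: "A \<in> carrier_mat n k" and nd: "\<not> distinct (cols A)"
  shows "rank A < k"
proof -
  obtain S where S: "maximal S (\<lambda>T. T \<subseteq> set (cols A) \<and> lin_indpt T)"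
    using maximal_exists[of "\<lambda>T. T \<subseteq> set (cols A) \<and> lin_indpt T" "card (set (cols A))" "{}"]
    by (meson List.finite_set card_mono empty_iff empty_subsetI finite_lin_indpt2 rev_finite_subset)
  then have "card S \<le> card (set (cols A))" by (simp add: card_mono maximal_def)
  also have "\<dots> < k" using A nd card_distinct cols_length card_length
    by (metis carrier_matD(2) order.not_eq_order_implies_strict)
  finally show ?thesis using rank_card_indpt[OF A S] by simp
qed

lemma (in vec_space) rank_eq_ncols_imp_inj:
  assumes A: "A \<in> carrier_mat n k" and r: "rank A = k"
    and v: "v \<in> carrier_vec k" and Av: "A *\<^sub>v v = 0\<^sub>v n"
  shows "v = 0\<^sub>v k"
proof (rule ccontr)
  assume "v \<noteq> 0\<^sub>v k"
  moreover have d: "distinct (cols A)" using non_distinct_cols_low_rank[OF A] r by force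
  ultimately have "lin_dep (set (cols A))" using lin_depI[OF A v _ Av] by blast
  then show False using full_rank_lin_indpt[OF A r d] by blast
qed

lemma (in vec_space) inj_imp_rank_eq_ncols:
  assumes A: "A \<in> carrier_mat n k"
    and inj: "\<And>v. v \<in> carrier_vec k \<Longrightarrow> A *\<^sub>v v = 0\<^sub>v n \<Longrightarrow> v = 0\<^sub>v k"
  shows "rank A = k"
proof -
  have d: "distinct (cols A)"
  proof (rule ccontr)
    assume "\<not> distinct (cols A)"
    then obtain a b where ab: "a \<noteq> b" "a < k" "b < k" "col A a = col A b"
      using distinct_conv_nth A by (metis carrier_matD(2) cols_length cols_nth)
    then have same_col: "\<And>i. i < n \<Longrightarrow> A $$ (i, a) = A $$ (i, b)"
      using A by (metis carrier_matD index_col)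
    define v :: "'a vec" where "v = unit_vec k a - unit_vec k b"
    have vc: "v \<in> carrier_vec k" unfolding v_def by auto
    have "A *\<^sub>v v = 0\<^sub>v n"
    proof (rule eq_vecI)
      fix i assume "i < dim_vec (0\<^sub>v n)"
      then have i: "i < n" by auto
      have "(A *\<^sub>v v) $ i = row A i \<bullet> unit_vec k a - row A i \<bullet> unit_vec k b"
        unfolding v_def using A i by (auto intro!: scalar_prod_minus_distrib[of _ k])
      also have "\<dots> = A $$ (i, a) - A $$ (i, b)" using A ab i by (simp add: scalar_prod_right_unit)
      also have "\<dots> = 0" using same_col i by simp
      finally show "(A *\<^sub>v v) $ i = 0\<^sub>v n $ i" using i by simp
    qed (use A in auto)
    then have "v = 0\<^sub>v k" using inj vc by blast
    then have "v $ a = 0" using ab by simp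
    moreover have "v $ a = 1" unfolding v_def using ab by auto
    ultimately show False by simp
  qed
  have "lin_indpt (set (cols A))"
    using lin_depE[OF A _ d] inj by (metis lin_depE)
  then show ?thesis using lin_indpt_full_rank[OF A d] by auto
qed

lemma mrank_mult_le:
  "A \<in> carrier_mat n k \<Longrightarrow> (B :: real mat) \<in> carrier_mat k m \<Longrightarrow> mrank (A * B) \<le> mrank A"
  using vec_space.rank_mult_le unfolding mrank_def by auto

lemma mrank_le_ncols: "(A :: real mat) \<in> carrier_mat n k \<Longrightarrow> mrank A \<le> k"
  using vec_space.rank_le_nc unfolding mrank_def by auto

lemma mrank_eq_ncols_imp_inj:
  "(A :: real mat) \<in> carrier_mat n k \<Longrightarrow> mrank A = k \<Longrightarrow> v \<in> carrier_vec k \<Longrightarrow>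
    A *\<^sub>v v = 0\<^sub>v n \<Longrightarrow> v = 0\<^sub>v k"
  using vec_space.rank_eq_ncols_imp_inj unfolding mrank_def by auto

lemma inj_imp_mrank_eq_ncols:
  "(A :: real mat) \<in> carrier_mat n k \<Longrightarrow>
    (\<And>v. v \<in> carrier_vec k \<Longrightarrow> A *\<^sub>v v = 0\<^sub>v n \<Longrightarrow> v = 0\<^sub>v k) \<Longrightarrow> mrank A = k"
  using vec_space.inj_imp_rank_eq_ncols unfolding mrank_def by auto

lemma mrank_eq_nrows_imp_transpose_inj:
  assumes A: "(A :: real mat) \<in> carrier_mat k m" and r: "mrank A = k"
    and w: "w \<in> carrier_vec k" and Aw: "transpose_mat A *\<^sub>v w = 0\<^sub>v m"
  shows "w = 0\<^sub>v k"
proof (rule ccontr)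
  assume nz: "w \<noteq> 0\<^sub>v k"
  define c where "c = w \<bullet> w"
  have c: "c \<noteq> 0" using scalar_prod_self_eq_0[OF w] nz unfolding c_def by blast
  \<comment> \<open>the orthogonal projection onto the complement of \<open>w\<close> fixes every column of \<open>A\<close>\<close>
  define Pi :: "real mat" where "Pi = mat k k (\<lambda>(a, b). (if a = b then 1 else 0) - w $ a * w $ b / c)"
  have Pi: "Pi \<in> carrier_mat k k" unfolding Pi_def by auto
  have Pi_mult: "(Pi *\<^sub>v x) $ a = x $ a - w $ a / c * (w \<bullet> x)"
    if x: "x \<in> carrier_vec k" and a: "a < k" for x a
  proof -
    have "(Pi *\<^sub>v x) $ a = (\<Sum>b<k. (if a = b then x $ b else 0) - w $ a / c * (w $ b * x $ b))"
      using a x by (auto simp: Pi_def scalar_prod_def lessThan_atLeast0 algebra_simps intro!: sum.cong)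
    also have "\<dots> = x $ a - w $ a / c * (w \<bullet> x)"
      using a x by (simp add: sum_subtractf sum_distrib_left sum_divide_distrib scalar_prod_def
          lessThan_atLeast0)
    finally show ?thesis .
  qed
  have "Pi * A = A"
  proof (rule eq_matI)
    fix a j assume a: "a < dim_row A" and j: "j < dim_col A"
    have "w \<bullet> col A j = (transpose_mat A *\<^sub>v w) $ j"
      using A w j by (simp add: comm_scalar_prod[of _ k])
    then have "w \<bullet> col A j = 0" using Aw A j by simp
    then show "(Pi * A) $$ (a, j) = A $$ (a, j)"
      using Pi_mult[of "col A j" a] A Pi a j by (simp add: col_mult2[symmetric])
  qed (use A Pi in auto)
  then have "k \<le> mrank Pi" using mrank_mult_le[OF Pi A] r by simp
  then have "mrank Pi = k" using mrank_le_ncols[OF Pi] by simp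
  moreover have "Pi *\<^sub>v w = 0\<^sub>v k"
    using Pi_mult[OF w] w c Pi unfolding c_def[symmetric] by (intro eq_vecI) auto
  ultimately show False using mrank_eq_ncols_imp_inj[OF Pi _ w] nz by blast
qed

lemma transpose_mult_cancel_full_rank:
  assumes A: "(A :: real mat) \<in> carrier_mat k m" and r: "mrank A = k"
    and W1: "W1 \<in> carrier_mat k p" and W2: "W2 \<in> carrier_mat k p"
    and eq: "transpose_mat A * W1 = transpose_mat A * W2"
  shows "W1 = W2"
proof (rule eq_matI)
  fix a j assume a: "a < dim_row W2" and j: "j < dim_col W2"
  have AT: "transpose_mat A \<in> carrier_mat m k" using A by auto
  have "transpose_mat A *\<^sub>v col W1 j = transpose_mat A *\<^sub>v col W2 j"
    using arg_cong[OF eq, of "\<lambda>X. col X j"] col_mult2[OF AT W1] col_mult2[OF AT W2] j W2 by simp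
  moreover have cols: "col W1 j \<in> carrier_vec k" "col W2 j \<in> carrier_vec k" using W1 W2 by auto
  ultimately have "transpose_mat A *\<^sub>v (col W1 j - col W2 j) = 0\<^sub>v m"
    using AT by (simp add: mult_minus_distrib_mat_vec[OF AT])
  moreover have "col W1 j - col W2 j \<in> carrier_vec k" using cols by simp
  ultimately have "col W1 j - col W2 j = 0\<^sub>v k"
    using mrank_eq_nrows_imp_transpose_inj[OF A r] by blast
  then have "(col W1 j - col W2 j) $ a = 0" using a W2 by simp
  then show "W1 $$ (a, j) = W2 $$ (a, j)" using a j W1 W2 by simp
qed (use W1 W2 in auto)

section \<open>Pseudoinverses of sandwiches \<open>F D F\<^sup>T\<close>\<close>

lemma is_pinv_unique:
  assumes X: "is_pinv A X" and Y: "is_pinv A Y"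
  shows "X = Y"
proof -
  from X have Xc: "dim_row X = dim_col A" "dim_col X = dim_row A"
    and X1: "A * X * A = A" and X2: "X * A * X = X"
    and X3: "transpose_mat (A * X) = A * X" and X4: "transpose_mat (X * A) = X * A"
    unfolding is_pinv_def by auto
  from Y have Yc: "dim_row Y = dim_col A" "dim_col Y = dim_row A"
    and Y1: "A * Y * A = A" and Y2: "Y * A * Y = Y"
    and Y3: "transpose_mat (A * Y) = A * Y" and Y4: "transpose_mat (Y * A) = Y * A"
    unfolding is_pinv_def by auto
  note simps = assoc_mult_mat_dim transpose_mult_mat_dim Xc Yc
  have "X = X * transpose_mat (A * X)" using X2 X3 Xc by (simp add: assoc_mult_mat_dim)
  also have "\<dots> = X * transpose_mat (A * Y * A * X)" using Y1 by simp
  also have "\<dots> = X * transpose_mat (A * X) * transpose_mat (A * Y)" by (simp add: simps)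
  also have "\<dots> = X * A * X * (A * Y)" using X3 Y3 by (simp add: simps)
  also have "\<dots> = X * A * Y" using X2 by (simp add: simps)
  finally have eX: "X = X * A * Y" .
  have "Y = transpose_mat (Y * A) * Y" using Y2 Y4 by simp
  also have "\<dots> = transpose_mat (Y * A * X * A) * Y" using X1 by (simp add: simps)
  also have "\<dots> = transpose_mat (X * A) * transpose_mat (Y * A) * Y" by (simp add: simps)
  also have "\<dots> = X * A * (Y * A * Y)" using X4 Y4 by (simp add: simps)
  also have "\<dots> = X * A * Y" using Y2 by simp
  finally show ?thesis using eX by simp
qed

lemma pinv_eqI: "is_pinv A X \<Longrightarrow> pinv A = X"
  unfolding pinv_def using is_pinv_unique by blast

lemma is_pinv_factored:
  fixes F1 F2 E Ei H1 H2 :: "real mat"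
  assumes F1: "F1 \<in> carrier_mat a k" and F2: "F2 \<in> carrier_mat b k"
    and E: "E \<in> carrier_mat k k" and Ei: "Ei \<in> carrier_mat k k"
    and E_Ei: "E * Ei = 1\<^sub>m k" and Ei_E: "Ei * E = 1\<^sub>m k"
    and H1: "H1 \<in> carrier_mat k k" and H1_left: "H1 * (transpose_mat F1 * F1) = 1\<^sub>m k"
    and H1_right: "(transpose_mat F1 * F1) * H1 = 1\<^sub>m k"
    and H2: "H2 \<in> carrier_mat k k" and H2_left: "H2 * (transpose_mat F2 * F2) = 1\<^sub>m k"
    and H2_right: "(transpose_mat F2 * F2) * H2 = 1\<^sub>m k"
  shows "is_pinv (F1 * E * transpose_mat F2) (F2 * H2 * Ei * H1 * transpose_mat F1)"
proof -
  have [simp]: "dim_row F1 = a" "dim_col F1 = k" "dim_row F2 = b" "dim_col F2 = k"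
    "dim_row E = k" "dim_col E = k" "dim_row Ei = k" "dim_col Ei = k"
    "dim_row H1 = k" "dim_col H1 = k" "dim_row H2 = k" "dim_col H2 = k"
    using assms by auto
  have H1_right': "transpose_mat F1 * (F1 * H1) = 1\<^sub>m k"
    using H1_right by (simp add: assoc_mult_mat_dim)
  have H2_right': "transpose_mat F2 * (F2 * H2) = 1\<^sub>m k"
    using H2_right by (simp add: assoc_mult_mat_dim)
  have H1_sym: "transpose_mat H1 = H1"
    by (rule transpose_inverse_of_symmetric[OF _ H1 _ H1_right])
      (use F1 in \<open>auto simp: transpose_mult_mat_dim\<close>)
  have H2_sym: "transpose_mat H2 = H2"
    by (rule transpose_inverse_of_symmetric[OF _ H2 _ H2_right])
      (use F2 in \<open>auto simp: transpose_mult_mat_dim\<close>)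
  note cancel = assoc_mult_mat_dim mult_mat_inverse_cancel3[OF H1_left] mult_mat_inverse_cancel3[OF H1_right']
    mult_mat_inverse_cancel3[OF H2_left] mult_mat_inverse_cancel3[OF H2_right']
    mult_mat_inverse_cancel[OF E_Ei] mult_mat_inverse_cancel[OF Ei_E]
  have NX: "F1 * E * transpose_mat F2 * (F2 * H2 * Ei * H1 * transpose_mat F1) = F1 * (H1 * transpose_mat F1)"
    by (simp add: cancel)
  have XN: "F2 * H2 * Ei * H1 * transpose_mat F1 * (F1 * E * transpose_mat F2) = F2 * (H2 * transpose_mat F2)"
    by (simp add: cancel)
  show ?thesis unfolding is_pinv_def NX XN
    by (intro conjI) (auto simp: cancel transpose_mult_mat_dim H1_sym H2_sym)
qed

lemma gram_eq_0_imp_eq_0: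
  assumes G: "(G :: real mat) \<in> carrier_mat r k" and GG: "transpose_mat G * G = 0\<^sub>m k k"
  shows "G = 0\<^sub>m r k"
proof (rule eq_matI)
  fix a l assume a: "a < dim_row (0\<^sub>m r k :: real mat)" and l: "l < dim_col (0\<^sub>m r k :: real mat)"
  have "(transpose_mat G * G) *\<^sub>v unit_vec k l = 0\<^sub>v k" unfolding GG by auto
  then have "G *\<^sub>v unit_vec k l = 0\<^sub>v r" using gram_mult_vec_eq_0_imp[OF G] by simp
  then have "(G *\<^sub>v unit_vec k l) $ a = 0" using a by simp
  then show "G $$ (a, l) = 0\<^sub>m r k $$ (a, l)" using a l G by simp
qed (use G in auto)

lemma gram_projection_eq_imp_in_col_space:
  fixes F1 F2 H1 :: "real mat"
  assumes F1: "F1 \<in> carrier_mat r k" and F2: "F2 \<in> carrier_mat r m"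
    and H1: "H1 \<in> carrier_mat k k" and H1_left: "H1 * (transpose_mat F1 * F1) = 1\<^sub>m k"
    and H1_right: "(transpose_mat F1 * F1) * H1 = 1\<^sub>m k"
    and proj: "transpose_mat F2 * F1 * H1 * transpose_mat F1 * F2 = transpose_mat F2 * F2"
  shows "F2 = F1 * (H1 * transpose_mat F1 * F2)"
proof -
  define W where "W = H1 * transpose_mat F1 * F2"
  have W: "W \<in> carrier_mat k m" unfolding W_def using F1 F2 H1 by auto
  have H1_sym: "transpose_mat H1 = H1"
    by (rule transpose_inverse_of_symmetric[OF _ H1 _ H1_right])
      (use F1 in \<open>auto simp: transpose_mult_mat_dim\<close>)
  have F1W: "F1 * W \<in> carrier_mat r m" using F1 W by auto
  have WT: "transpose_mat W = transpose_mat F2 * F1 * H1"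
    unfolding W_def using F1 F2 H1 H1_sym by (simp add: transpose_mult_mat_dim assoc_mult_mat_dim)
  have F2TF1W: "transpose_mat F2 * (F1 * W) = transpose_mat F2 * F2"
    unfolding W_def using F1 F2 H1 proj by (simp add: assoc_mult_mat_dim)
  then have WTF1TF1W: "transpose_mat W * transpose_mat F1 * (F1 * W) = transpose_mat F2 * F2"
    unfolding WT using F1 F2 H1 W by (simp add: assoc_mult_mat_dim mult_mat_inverse_cancel3[OF H1_left])
  have WTF1TF2: "transpose_mat W * transpose_mat F1 * F2 = transpose_mat F2 * F2"
    unfolding WT using F1 F2 H1 proj by (simp add: assoc_mult_mat_dim)
  have F2T: "transpose_mat F2 \<in> carrier_mat m r"
    and WTF1T: "transpose_mat W * transpose_mat F1 \<in> carrier_mat m r"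
    using F1 F2 W by auto
  have F2_F1W: "F2 - F1 * W \<in> carrier_mat r m" using minus_carrier_mat[OF F1W] .
  have "transpose_mat (F2 - F1 * W) * (F2 - F1 * W)
      = (transpose_mat F2 - transpose_mat W * transpose_mat F1) * (F2 - F1 * W)"
    using F1 W by (simp add: transpose_minus[OF F2 F1W] transpose_mult_mat_dim)
  also have "\<dots> = transpose_mat F2 * F2 - transpose_mat F2 * (F1 * W)
      - (transpose_mat W * transpose_mat F1 * F2 - transpose_mat W * transpose_mat F1 * (F1 * W))"
    unfolding minus_mult_distrib_mat[OF F2T WTF1T F2_F1W]
      mult_minus_distrib_mat[OF F2T F2 F1W] mult_minus_distrib_mat[OF WTF1T F2 F1W] ..
  also have "\<dots> = 0\<^sub>m m m"
    unfolding F2TF1W WTF1TF1W WTF1TF2 using F2 by (intro eq_matI) auto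
  finally have "F2 - F1 * W = 0\<^sub>m r m" by (rule gram_eq_0_imp_eq_0[OF F2_F1W])
  show ?thesis unfolding W_def[symmetric]
  proof (rule eq_matI)
    fix a b assume "a < dim_row (F1 * W)" "b < dim_col (F1 * W)"
    moreover from this have "(F2 - F1 * W) $$ (a, b) = 0"
      using \<open>F2 - F1 * W = 0\<^sub>m r m\<close> F1 W by simp
    ultimately show "F2 $$ (a, b) = (F1 * W) $$ (a, b)" using F2 F1W by simp
  qed (use F2 F1W in auto)
qed

definition pinv_criterion :: "nat \<Rightarrow> real mat \<Rightarrow> real mat \<Rightarrow> bool" where
  "pinv_criterion k C1 C2 \<longleftrightarrow> mrank (pinv C2 * C1) = k \<and> pinv C2 * C1 = pinv (pinv C1 * C2)"

lemma pinv_gram_sandwich: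
  fixes F H D Di :: "real mat"
  assumes F: "F \<in> carrier_mat r k" and H: "H \<in> carrier_mat k k"
    and H_left: "H * (transpose_mat F * F) = 1\<^sub>m k" and H_right: "(transpose_mat F * F) * H = 1\<^sub>m k"
    and D: "D \<in> carrier_mat k k" and Di: "Di \<in> carrier_mat k k"
    and D_Di: "D * Di = 1\<^sub>m k" and Di_D: "Di * D = 1\<^sub>m k"
  shows "pinv (F * D * transpose_mat F) = F * H * Di * H * transpose_mat F"
  by (rule pinv_eqI, rule is_pinv_factored[OF F F D Di D_Di Di_D H H_left H_right H H_left H_right])

lemma pinv_criterion_same_factor:
  fixes F D1 D1i D2 D2i :: "real mat"
  assumes F: "F \<in> carrier_mat r k" and rank_F: "mrank F = k"
    and D1: "D1 \<in> carrier_mat k k" and D1i: "D1i \<in> carrier_mat k k"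
    and D2: "D2 \<in> carrier_mat k k" and D2i: "D2i \<in> carrier_mat k k"
    and D1_D1i: "D1 * D1i = 1\<^sub>m k" and D1i_D1: "D1i * D1 = 1\<^sub>m k"
    and D2_D2i: "D2 * D2i = 1\<^sub>m k" and D2i_D2: "D2i * D2 = 1\<^sub>m k"
  shows "pinv_criterion k (F * D1 * transpose_mat F) (F * D2 * transpose_mat F)"
proof -
  obtain H where H: "H \<in> carrier_mat k k" and H_left: "H * (transpose_mat F * F) = 1\<^sub>m k"
    and H_right: "(transpose_mat F * F) * H = 1\<^sub>m k"
    using gram_invertible[OF F] mrank_eq_ncols_imp_inj[OF F rank_F] by blast
  have [simp]: "dim_row F = r" "dim_col F = k" "dim_row D1 = k" "dim_col D1 = k"
    "dim_row D1i = k" "dim_col D1i = k" "dim_row D2 = k" "dim_col D2 = k"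
    "dim_row D2i = k" "dim_col D2i = k" "dim_row H = k" "dim_col H = k"
    using assms H by auto
  have H_right': "transpose_mat F * (F * H) = 1\<^sub>m k" using H_right by (simp add: assoc_mult_mat_dim)
  note cancel = assoc_mult_mat_dim mult_mat_inverse_cancel3[OF H_left] mult_mat_inverse_cancel3[OF H_right']
    mult_mat_inverse_cancel[OF D1_D1i] mult_mat_inverse_cancel[OF D1i_D1]
    mult_mat_inverse_cancel[OF D2_D2i] mult_mat_inverse_cancel[OF D2i_D2] H_left H_right'
    D1_D1i D1i_D1 D2_D2i D2i_D2
  define T where "T = H * (D2i * (D1 * transpose_mat F))"
  define E where "E = H * D1i * D2"
  define Ei where "Ei = D2i * D1 * (transpose_mat F * F)"
  have E: "E \<in> carrier_mat k k" "Ei \<in> carrier_mat k k" unfolding E_def Ei_def by auto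
  have E_Ei: "E * Ei = 1\<^sub>m k" and Ei_E: "Ei * E = 1\<^sub>m k" unfolding E_def Ei_def by (simp_all add: cancel)
  have T_eq: "pinv (F * D2 * transpose_mat F) * (F * D1 * transpose_mat F) = F * T"
    unfolding pinv_gram_sandwich[OF F H H_left H_right D2 D2i D2_D2i D2i_D2] T_def by (simp add: cancel)
  have N_eq: "pinv (F * D1 * transpose_mat F) * (F * D2 * transpose_mat F) = F * E * transpose_mat F"
    unfolding pinv_gram_sandwich[OF F H H_left H_right D1 D1i D1_D1i D1i_D1] E_def by (simp add: cancel)
  have pinv_eq: "pinv (pinv (F * D1 * transpose_mat F) * (F * D2 * transpose_mat F)) = F * T"
    unfolding N_eq pinv_gram_sandwich[OF F H H_left H_right E E_Ei Ei_E] T_def Ei_def by (simp add: cancel)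
  define G where "G = F * (H * D1i * D2 * (transpose_mat F * F))"
  have T: "T \<in> carrier_mat k r" and FT: "F * T \<in> carrier_mat r r" and G: "G \<in> carrier_mat r k"
    unfolding T_def G_def by auto
  have "F * T * G = F" unfolding T_def G_def by (simp add: cancel)
  then have "k \<le> mrank (F * T)" using mrank_mult_le[OF FT G] rank_F by simp
  moreover have "mrank (F * T) \<le> k" using mrank_mult_le[OF F T] rank_F by simp
  ultimately show ?thesis unfolding pinv_criterion_def T_eq pinv_eq by simp
qed

lemma pinv_criterion_rank_imp_cross_gram_inj:
  fixes F1 F2 D1 D1i D2 D2i :: "real mat"
  assumes F1: "F1 \<in> carrier_mat r k" and F2: "F2 \<in> carrier_mat r k" and rank_F2: "mrank F2 = k"
    and D1: "D1 \<in> carrier_mat k k" and D1i: "D1i \<in> carrier_mat k k"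
    and D2: "D2 \<in> carrier_mat k k" and D2i: "D2i \<in> carrier_mat k k"
    and D1_D1i: "D1 * D1i = 1\<^sub>m k"
    and D2_D2i: "D2 * D2i = 1\<^sub>m k" and D2i_D2: "D2i * D2 = 1\<^sub>m k"
    and rank: "mrank (pinv (F2 * D2 * transpose_mat F2) * (F1 * D1 * transpose_mat F1)) = k"
    and v: "v \<in> carrier_vec k" and Kv: "(transpose_mat F2 * F1) *\<^sub>v v = 0\<^sub>v k"
  shows "v = 0\<^sub>v k"
proof -
  obtain H2 where H2: "H2 \<in> carrier_mat k k" and H2_left: "H2 * (transpose_mat F2 * F2) = 1\<^sub>m k"
    and H2_right: "(transpose_mat F2 * F2) * H2 = 1\<^sub>m k"
    using gram_invertible[OF F2] mrank_eq_ncols_imp_inj[OF F2 rank_F2] by blast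
  define A where "A = F2 * H2 * D2i * H2 * (transpose_mat F2 * F1)"
  have A: "A \<in> carrier_mat r k" and AD1: "A * D1 \<in> carrier_mat r k"
    unfolding A_def using F1 F2 H2 D1 D2i by auto
  have "pinv (F2 * D2 * transpose_mat F2) * (F1 * D1 * transpose_mat F1) = A * D1 * transpose_mat F1"
    unfolding pinv_gram_sandwich[OF F2 H2 H2_left H2_right D2 D2i D2_D2i D2i_D2] A_def
    using F1 F2 H2 D1 D2i by (simp add: assoc_mult_mat_dim)
  then have "k \<le> mrank (A * D1)" using rank mrank_mult_le[OF AD1, of "transpose_mat F1" r] F1 by simp
  then have "mrank (A * D1) = k" using mrank_le_ncols[OF AD1] by simp
  moreover have D1iv: "D1i *\<^sub>v v \<in> carrier_vec k" using D1i v by simp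
  moreover have "(A * D1) *\<^sub>v (D1i *\<^sub>v v) = 0\<^sub>v r"
  proof -
    have "(A * D1) *\<^sub>v (D1i *\<^sub>v v) = A *\<^sub>v v"
      using A D1 D1i v D1_D1i by (simp add: assoc_mult_mat_vec[symmetric, of _ r k _ k])
    also have "\<dots> = (F2 * H2 * D2i * H2) *\<^sub>v ((transpose_mat F2 * F1) *\<^sub>v v)"
      unfolding A_def by (rule assoc_mult_mat_vec) (use F1 F2 H2 D2i v in auto)
    finally show ?thesis using Kv F2 H2 D2i by simp
  qed
  ultimately have "D1i *\<^sub>v v = 0\<^sub>v k" using mrank_eq_ncols_imp_inj[OF AD1] by blast
  then have "(D1 * D1i) *\<^sub>v v = 0\<^sub>v k" using D1 D1i v by (simp add: assoc_mult_mat_vec)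
  then show ?thesis using D1_D1i v by simp
qed

lemma pinv_criterion_imp_gram_projection_eq:
  fixes F1 F2 D1 D1i D2 D2i H1 H2 Kt :: "real mat"
  assumes F1: "F1 \<in> carrier_mat r k" and F2: "F2 \<in> carrier_mat r k"
    and D1: "D1 \<in> carrier_mat k k" and D1i: "D1i \<in> carrier_mat k k"
    and D2: "D2 \<in> carrier_mat k k" and D2i: "D2i \<in> carrier_mat k k"
    and D1_D1i: "D1 * D1i = 1\<^sub>m k" and D1i_D1: "D1i * D1 = 1\<^sub>m k"
    and D2_D2i: "D2 * D2i = 1\<^sub>m k" and D2i_D2: "D2i * D2 = 1\<^sub>m k"
    and H1: "H1 \<in> carrier_mat k k" and H1_left: "H1 * (transpose_mat F1 * F1) = 1\<^sub>m k"
    and H1_right: "(transpose_mat F1 * F1) * H1 = 1\<^sub>m k"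
    and H2: "H2 \<in> carrier_mat k k" and H2_left: "H2 * (transpose_mat F2 * F2) = 1\<^sub>m k"
    and H2_right: "(transpose_mat F2 * F2) * H2 = 1\<^sub>m k"
    and Kt: "Kt \<in> carrier_mat k k" and Kt_left: "Kt * (transpose_mat F1 * F2) = 1\<^sub>m k"
    and Kt_right: "transpose_mat F1 * (F2 * Kt) = 1\<^sub>m k"
    and eq: "pinv (F2 * D2 * transpose_mat F2) * (F1 * D1 * transpose_mat F1) =
      pinv (pinv (F1 * D1 * transpose_mat F1) * (F2 * D2 * transpose_mat F2))"
  shows "transpose_mat F2 * F1 * H1 * transpose_mat F1 * F2 = transpose_mat F2 * F2"
proof -
  have [simp]: "dim_row F1 = r" "dim_col F1 = k" "dim_row F2 = r" "dim_col F2 = k"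
    "dim_row D1 = k" "dim_col D1 = k" "dim_row D1i = k" "dim_col D1i = k"
    "dim_row D2 = k" "dim_col D2 = k" "dim_row D2i = k" "dim_col D2i = k"
    "dim_row H1 = k" "dim_col H1 = k" "dim_row H2 = k" "dim_col H2 = k"
    "dim_row Kt = k" "dim_col Kt = k"
    using assms by auto
  have H1_right': "transpose_mat F1 * (F1 * H1) = 1\<^sub>m k" using H1_right by (simp add: assoc_mult_mat_dim)
  have H2_right': "transpose_mat F2 * (F2 * H2) = 1\<^sub>m k" using H2_right by (simp add: assoc_mult_mat_dim)
  note cancel = assoc_mult_mat_dim mult_mat_inverse_cancel3[OF H1_left] mult_mat_inverse_cancel3[OF H1_right']
    mult_mat_inverse_cancel3[OF H2_left] mult_mat_inverse_cancel3[OF H2_right']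
    mult_mat_inverse_cancel3[OF Kt_right] mult_mat_inverse_cancel3[OF Kt_left]
    mult_mat_inverse_cancel[OF D1_D1i] mult_mat_inverse_cancel[OF D1i_D1]
    mult_mat_inverse_cancel[OF D2_D2i] mult_mat_inverse_cancel[OF D2i_D2]
    H1_left H1_right' H2_left H2_right' Kt_left Kt_right D1_D1i D1i_D1 D2_D2i D2i_D2
  define E where "E = H1 * D1i * H1 * (transpose_mat F1 * F2) * D2"
  define Ei where "Ei = D2i * Kt * (transpose_mat F1 * F1) * D1 * (transpose_mat F1 * F1)"
  have E: "E \<in> carrier_mat k k" "Ei \<in> carrier_mat k k" unfolding E_def Ei_def by auto
  have E_Ei: "E * Ei = 1\<^sub>m k" and Ei_E: "Ei * E = 1\<^sub>m k" unfolding E_def Ei_def by (simp_all add: cancel)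
  have N_eq: "pinv (F1 * D1 * transpose_mat F1) * (F2 * D2 * transpose_mat F2) = F1 * E * transpose_mat F2"
    unfolding pinv_gram_sandwich[OF F1 H1 H1_left H1_right D1 D1i D1_D1i D1i_D1] E_def by (simp add: cancel)
  have "F2 * H2 * D2i * H2 * transpose_mat F2 * (F1 * D1 * transpose_mat F1) = F2 * H2 * Ei * H1 * transpose_mat F1"
    using eq unfolding N_eq pinv_gram_sandwich[OF F2 H2 H2_left H2_right D2 D2i D2_D2i D2i_D2]
      is_pinv_factored[OF F1 F2 E E_Ei Ei_E H1 H1_left H1_right H2 H2_left H2_right, THEN pinv_eqI] .
  \<comment> \<open>strip the outer factors \<open>F2 H2\<close> and \<open>H1 F1\<^sup>T\<close>, then the invertible \<open>H2 D2\<^sup>-\<^sup>1\<close> and \<open>D1\<close>\<close>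
  then have "H2 * transpose_mat F2 * (F2 * H2 * D2i * H2 * transpose_mat F2 * (F1 * D1 * transpose_mat F1))
        * (F1 * H1)
      = H2 * transpose_mat F2 * (F2 * H2 * Ei * H1 * transpose_mat F1) * (F1 * H1)"
    by (rule arg_cong)
  then have "H2 * (D2i * (H2 * (transpose_mat F2 * (F1 * D1))))
      = H2 * (D2i * (Kt * (transpose_mat F1 * (F1 * D1))))"
    unfolding Ei_def by (simp add: cancel)
  then have "D2 * (transpose_mat F2 * F2) * (H2 * (D2i * (H2 * (transpose_mat F2 * (F1 * D1))))) * D1i
      = D2 * (transpose_mat F2 * F2) * (H2 * (D2i * (Kt * (transpose_mat F1 * (F1 * D1))))) * D1i"
    by (rule arg_cong)
  then have "H2 * (transpose_mat F2 * F1) = Kt * (transpose_mat F1 * F1)"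
    by (simp add: cancel)
  then have "transpose_mat F2 * F2 * (H2 * (transpose_mat F2 * F1)) * (H1 * (transpose_mat F1 * F2))
      = transpose_mat F2 * F2 * (Kt * (transpose_mat F1 * F1)) * (H1 * (transpose_mat F1 * F2))"
    by (rule arg_cong)
  then show ?thesis by (simp add: cancel)
qed

lemma pinv_criterion_imp_factors_through:
  fixes F1 F2 D1 D1i D2 D2i :: "real mat"
  assumes F1: "F1 \<in> carrier_mat r k" and F2: "F2 \<in> carrier_mat r k"
    and rank_F1: "mrank F1 = k" and rank_F2: "mrank F2 = k"
    and D1: "D1 \<in> carrier_mat k k" and D1i: "D1i \<in> carrier_mat k k"
    and D2: "D2 \<in> carrier_mat k k" and D2i: "D2i \<in> carrier_mat k k"
    and D1_D1i: "D1 * D1i = 1\<^sub>m k" and D1i_D1: "D1i * D1 = 1\<^sub>m k"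
    and D2_D2i: "D2 * D2i = 1\<^sub>m k" and D2i_D2: "D2i * D2 = 1\<^sub>m k"
    and crit: "pinv_criterion k (F1 * D1 * transpose_mat F1) (F2 * D2 * transpose_mat F2)"
  shows "\<exists>W \<in> carrier_mat k k. F2 = F1 * W"
proof -
  obtain H1 where H1: "H1 \<in> carrier_mat k k" and H1_left: "H1 * (transpose_mat F1 * F1) = 1\<^sub>m k"
    and H1_right: "(transpose_mat F1 * F1) * H1 = 1\<^sub>m k"
    using gram_invertible[OF F1] mrank_eq_ncols_imp_inj[OF F1 rank_F1] by blast
  obtain H2 where H2: "H2 \<in> carrier_mat k k" and H2_left: "H2 * (transpose_mat F2 * F2) = 1\<^sub>m k"
    and H2_right: "(transpose_mat F2 * F2) * H2 = 1\<^sub>m k"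
    using gram_invertible[OF F2] mrank_eq_ncols_imp_inj[OF F2 rank_F2] by blast
  obtain Ki where Ki: "Ki \<in> carrier_mat k k" and K_Ki: "transpose_mat F2 * F1 * Ki = 1\<^sub>m k"
    and Ki_K: "Ki * (transpose_mat F2 * F1) = 1\<^sub>m k"
    using inj_imp_invertible_mat[of "transpose_mat F2 * F1" k] F1 F2
      pinv_criterion_rank_imp_cross_gram_inj[OF F1 F2 rank_F2 D1 D1i D2 D2i D1_D1i D2_D2i D2i_D2]
      crit unfolding pinv_criterion_def by (metis mult_carrier_mat transpose_carrier_mat)
  have Kt: "transpose_mat Ki \<in> carrier_mat k k" using Ki by simp
  have Kt_right: "transpose_mat F1 * (F2 * transpose_mat Ki) = 1\<^sub>m k"
    using arg_cong[OF Ki_K, of transpose_mat] Ki F1 F2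
    by (simp add: transpose_mult_mat_dim assoc_mult_mat_dim)
  have Kt_left: "transpose_mat Ki * (transpose_mat F1 * F2) = 1\<^sub>m k"
    using arg_cong[OF K_Ki, of transpose_mat] Ki F1 F2
    by (simp add: transpose_mult_mat_dim assoc_mult_mat_dim)
  have "F2 = F1 * (H1 * transpose_mat F1 * F2)"
    using crit unfolding pinv_criterion_def
    by (intro gram_projection_eq_imp_in_col_space[OF F1 F2 H1 H1_left H1_right]
        pinv_criterion_imp_gram_projection_eq[OF F1 F2 D1 D1i D2 D2i D1_D1i D1i_D1 D2_D2i D2i_D2
          H1 H1_left H1_right H2 H2_left H2_right Kt Kt_left Kt_right]) simp
  moreover have "H1 * transpose_mat F1 * F2 \<in> carrier_mat k k" using F1 F2 H1 by auto
  ultimately show ?thesis by blast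
qed

section \<open>The shuffle matrix\<close>

lemma sum_lessThan_add_split: "(\<Sum>k<a + (b :: nat). g k) = (\<Sum>k<a. g k) + (\<Sum>k<b. g (a + k))"
  by (induction b) (auto simp: algebra_simps)

lemma sum_lessThan_mult_blocks: "(\<Sum>k<L * (n :: nat). g k) = (\<Sum>j<n. \<Sum>l<L. g (j * L + l))"
proof (induction n)
  case (Suc n)
  have "(\<Sum>k<L * Suc n. g k) = (\<Sum>k<L * n + L. g k)" by (simp add: algebra_simps)
  also have "\<dots> = (\<Sum>k<L * n. g k) + (\<Sum>l<L. g (L * n + l))" by (rule sum_lessThan_add_split)
  finally show ?case using Suc by (simp add: algebra_simps)
qed simp

lemma block_index_less: "j < n \<Longrightarrow> l < L \<Longrightarrow> j * L + l < L * (n :: nat)"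
proof -
  assume j: "j < n" and l: "l < L"
  have "j * L + l < (j + 1) * L" using l by simp
  also have "\<dots> \<le> n * L" using j by (intro mult_le_mono1) simp
  finally show ?thesis by (simp add: mult.commute)
qed

lemma block_div_mod: "l < L \<Longrightarrow> (j * L + l) div L = j" "l < L \<Longrightarrow> (j * L + l) mod (L :: nat) = l"
  by auto

lemma shuffle_row_index_less:
  "j < n \<Longrightarrow> l < L \<Longrightarrow> j * L + l < 2 * L * (n :: nat)"
  "j < n \<Longrightarrow> l < L \<Longrightarrow> L * n + j * L + l < 2 * L * n"
  using block_index_less[of j n l L] by auto

lemma two_block_index_cases:
  assumes "k < 2 * L * (n :: nat)"
  obtains (plus) b l where "b < n" "l < L" "k = b * L + l"
    | (minus) a l where "a < n" "l < L" "k = L * n + a * L + l"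
proof (cases "k < L * n")
  case True
  then have "L > 0" by (cases L) auto
  then show ?thesis
    using True plus[of "k div L" "k mod L"] by (simp add: less_mult_imp_div_less mult.commute)
next
  case False
  have "L > 0" using assms by (cases L) auto
  moreover have "k - L * n < n * L" using assms False by (simp add: algebra_simps)
  ultimately show ?thesis
    using False minus[of "(k - L * n) div L" "(k - L * n) mod L"] by (simp add: less_mult_imp_div_less)
qed

lemma sum_block_delta:
  "b < (n :: nat) \<Longrightarrow> (\<Sum>j<n. \<Sum>l<(L :: nat). if j = b then G l else 0) = (\<Sum>l<L. G l)"
proof -
  assume b: "b < n"
  have "(\<Sum>j<n. \<Sum>l<L. if j = b then G l else 0) = (\<Sum>j<n. if j = b then (\<Sum>l<L. G l) else 0)"
    by (rule sum.cong) auto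
  also have "\<dots> = (\<Sum>l<L. G l)" using b by simp
  finally show ?thesis .
qed

lemma index_mult_mat_sum:
  "i < dim_row A \<Longrightarrow> j < dim_col B \<Longrightarrow> dim_col A = k \<Longrightarrow> dim_row B = k \<Longrightarrow>
    (A * B) $$ (i, j) = (\<Sum>c<k. A $$ (i, c) * B $$ (c, j))"
  by (simp add: scalar_prod_def lessThan_atLeast0)

lemma shuffle_transpose_mult_vec_entry:
  assumes v: "v \<in> carrier_vec (2 * L * n)" and a: "a < n" and b: "b < n"
  shows "(transpose_mat (shuffle n L P Q) *\<^sub>v v) $ (a * n + b) =
    (\<Sum>l<L. P b $$ (l, a) * v $ (b * L + l)) - (\<Sum>l<L. Q a $$ (l, b) * v $ (L * n + a * L + l))"
proof -
  have c: "a * n + b < n * n" using block_index_less[OF a b] by (simp add: mult.commute)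
  have cd: "(a * n + b) div n = a" "(a * n + b) mod n = b" using b by auto
  define f where "f k = shuffle n L P Q $$ (k, a * n + b) * v $ k" for k
  have "(transpose_mat (shuffle n L P Q) *\<^sub>v v) $ (a * n + b) = (\<Sum>k<2 * L * n. f k)"
    using v c unfolding f_def by (simp add: shuffle_def scalar_prod_def lessThan_atLeast0 mult.commute)
  also have "\<dots> = (\<Sum>k<L * n. f k) + (\<Sum>k<L * n. f (L * n + k))"
    using sum_lessThan_add_split[of f "L * n" "L * n"] by (simp add: mult_2 add_mult_distrib)
  also have "(\<Sum>k<L * n. f k) = (\<Sum>j<n. \<Sum>l<L. f (j * L + l))" by (rule sum_lessThan_mult_blocks)
  also have "\<dots> = (\<Sum>j<n. \<Sum>l<L. if j = b then P b $$ (l, a) * v $ (b * L + l) else 0)"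
  proof (intro sum.cong refl)
    fix j l assume j: "j \<in> {..<n}" and l: "l \<in> {..<L}"
    have lt: "j * L + l < L * n" using block_index_less j l by auto
    have "j * L + l < 2 * L * n" using lt by simp
    then show "f (j * L + l) = (if j = b then P b $$ (l, a) * v $ (b * L + l) else 0)"
      unfolding f_def shuffle_def using c lt l cd by (auto simp: Let_def)
  qed
  also have "\<dots> = (\<Sum>l<L. P b $$ (l, a) * v $ (b * L + l))"
    using b by (rule sum_block_delta)
  also have "(\<Sum>k<L * n. f (L * n + k)) = (\<Sum>j<n. \<Sum>l<L. f (L * n + (j * L + l)))"
    by (rule sum_lessThan_mult_blocks)
  also have "\<dots> = (\<Sum>j<n. \<Sum>l<L. if j = a then - (Q a $$ (l, b) * v $ (L * n + a * L + l)) else 0)"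
  proof (intro sum.cong refl)
    fix j l assume j: "j \<in> {..<n}" and l: "l \<in> {..<L}"
    have lt: "j * L + l < L * n" using block_index_less j l by auto
    have "L * n + (j * L + l) < 2 * L * n" using lt by simp
    then show "f (L * n + (j * L + l))
        = (if j = a then - (Q a $$ (l, b) * v $ (L * n + a * L + l)) else 0)"
      unfolding f_def shuffle_def using c lt l cd by (auto simp: Let_def add.assoc)
  qed
  also have "\<dots> = - (\<Sum>l<L. Q a $$ (l, b) * v $ (L * n + a * L + l))"
    using sum_block_delta[OF a, where L=L and G="\<lambda>l. - (Q a $$ (l, b) * v $ (L * n + a * L + l))"]
    by (simp add: sum_negf)
  finally show ?thesis by simp
qed

lemma cokernel_shuffle_iff:
  assumes v: "v \<in> carrier_vec (2 * L * n)"
  shows "v \<in> cokernel (shuffle n L P Q) \<longleftrightarrow> (\<forall>a<n. \<forall>b<n.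
    (\<Sum>l<L. P b $$ (l, a) * v $ (b * L + l)) = (\<Sum>l<L. Q a $$ (l, b) * v $ (L * n + a * L + l)))"
    (is "_ \<longleftrightarrow> (\<forall>a<n. \<forall>b<n. ?eq a b)")
proof
  assume "v \<in> cokernel (shuffle n L P Q)"
  then have z: "transpose_mat (shuffle n L P Q) *\<^sub>v v = 0\<^sub>v (n * n)"
    unfolding cokernel_def by (simp add: shuffle_def)
  show "\<forall>a<n. \<forall>b<n. ?eq a b"
  proof (intro allI impI)
    fix a b assume a: "a < n" and b: "b < n"
    have "a * n + b < n * n" using block_index_less[OF a b] by (simp add: mult.commute)
    then have "(transpose_mat (shuffle n L P Q) *\<^sub>v v) $ (a * n + b) = 0" using z by simp
    then show "?eq a b" using shuffle_transpose_mult_vec_entry[OF v a b] by simp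
  qed
next
  assume eq: "\<forall>a<n. \<forall>b<n. ?eq a b"
  have "transpose_mat (shuffle n L P Q) *\<^sub>v v = 0\<^sub>v (n * n)"
  proof (rule eq_vecI)
    fix c assume "c < dim_vec (0\<^sub>v (n * n))"
    then have c: "c < n * n" by simp
    then have "n > 0" by (cases n) auto
    then have a: "c div n < n" and b: "c mod n < n" using c by (auto simp: less_mult_imp_div_less)
    have "(transpose_mat (shuffle n L P Q) *\<^sub>v v) $ (c div n * n + c mod n) = 0"
      using shuffle_transpose_mult_vec_entry[OF v a b] eq a b by simp
    then show "(transpose_mat (shuffle n L P Q) *\<^sub>v v) $ c = 0\<^sub>v (n * n) $ c" using c by simp
  qed (simp add: shuffle_def)
  then show "v \<in> cokernel (shuffle n L P Q)" using v unfolding cokernel_def by (simp add: shuffle_def)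
qed

lemma Yblk_Zblk_dims[simp]:
  "dim_row (Yblk n L B b) = dim_row B" "dim_col (Yblk n L B b) = L"
  "dim_row (Zblk n L B b) = dim_row B" "dim_col (Zblk n L B b) = L"
  by (simp_all add: Yblk_def Zblk_def)

lemma Yblk_index: "q < dim_row B \<Longrightarrow> l < L \<Longrightarrow> Yblk n L B b $$ (q, l) = B $$ (q, b * L + l)"
  by (simp add: Yblk_def row_idx_def)

lemma Zblk_index: "q < dim_row B \<Longrightarrow> l < L \<Longrightarrow> Zblk n L B a $$ (q, l) = B $$ (q, L * n + a * L + l)"
  by (simp add: Zblk_def row_idx_def)

lemma rows_in_cokernel_shuffle_iff:
  assumes B: "B \<in> carrier_mat m (2 * L * n)"
    and P: "\<And>b. b < n \<Longrightarrow> P b \<in> carrier_mat L n" and Q: "\<And>a. a < n \<Longrightarrow> Q a \<in> carrier_mat L n"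
  shows "(\<forall>q<m. row B q \<in> cokernel (shuffle n L P Q)) \<longleftrightarrow>
    (\<forall>q<m. \<forall>a<n. \<forall>b<n. (Yblk n L B b * P b) $$ (q, a) = (Zblk n L B a * Q a) $$ (q, b))"
proof -
  have Y: "(Yblk n L B b * P b) $$ (q, a) = (\<Sum>l<L. P b $$ (l, a) * row B q $ (b * L + l))"
    if "q < m" "a < n" "b < n" for q a b
    using that B P[OF that(3)] shuffle_row_index_less(1)[OF that(3)]
    by (subst index_mult_mat_sum[of _ _ _ _ L]) (auto simp: Yblk_index intro!: sum.cong)
  have Z: "(Zblk n L B a * Q a) $$ (q, b) = (\<Sum>l<L. Q a $$ (l, b) * row B q $ (L * n + a * L + l))"
    if "q < m" "a < n" "b < n" for q a b
    using that B Q[OF that(2)] shuffle_row_index_less(2)[OF that(2)]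
    by (subst index_mult_mat_sum[of _ _ _ _ L]) (auto simp: Zblk_index intro!: sum.cong)
  have "row B q \<in> cokernel (shuffle n L P Q) \<longleftrightarrow>
      (\<forall>a<n. \<forall>b<n. (Yblk n L B b * P b) $$ (q, a) = (Zblk n L B a * Q a) $$ (q, b))" if "q < m" for q
    using cokernel_shuffle_iff[of "row B q"] B that Y[OF that] Z[OF that] by simp
  then show ?thesis by blast
qed

section \<open>Connected components\<close>

lemma gconn_sym: "gconn n M l x y \<Longrightarrow> gconn n M l y x"
  unfolding gconn_def
proof (induction rule: rtranclp.induct)
  case (rtrancl_into_rtrancl a b c)
  moreover have "gedge n M l c b" using rtrancl_into_rtrancl(2) unfolding gedge_def by auto
  ultimately show ?case by (metis converse_rtranclp_into_rtranclp)
qed simp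

lemma gconn_trans: "gconn n M l x y \<Longrightarrow> gconn n M l y z \<Longrightarrow> gconn n M l x z"
  unfolding gconn_def by (rule rtranclp_trans)

definition comp_of :: "nat \<Rightarrow> (nat \<Rightarrow> nat \<Rightarrow> nat \<Rightarrow> real) \<Rightarrow> nat \<Rightarrow> nat \<times> bool \<Rightarrow> (nat \<times> bool) set" where
  "comp_of n M l x = {y \<in> gverts n. gconn n M l x y}"

lemma comp_of_in_comps: "fst x < n \<Longrightarrow> comp_of n M l x \<in> comps n M l \<and> x \<in> comp_of n M l x"
  unfolding comp_of_def comps_def gverts_def gconn_def by auto

lemma mem_comps_iff_eq_comp_of:
  assumes C: "C \<in> comps n M l" and x: "fst x < n"
  shows "x \<in> C \<longleftrightarrow> C = comp_of n M l x"
proof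
  assume xC: "x \<in> C"
  from C obtain z where Cz: "C = comp_of n M l z"
    unfolding comps_def comp_of_def by auto
  then have "gconn n M l z x" using xC unfolding comp_of_def by auto
  then show "C = comp_of n M l x" unfolding Cz comp_of_def
    using gconn_trans gconn_sym by blast
next
  assume "C = comp_of n M l x"
  then show "x \<in> C" using comp_of_in_comps[OF x] by simp
qed

lemma gconn_imp_same_comp:
  assumes C: "C \<in> comps n M l" and g: "gconn n M l u w" and u: "fst u < n" and w: "fst w < n"
  shows "u \<in> C \<longleftrightarrow> w \<in> C"
proof -
  have "comp_of n M l u = comp_of n M l w" unfolding comp_of_def
    using g gconn_trans gconn_sym by blast
  then show ?thesis using mem_comps_iff_eq_comp_of[OF C u] mem_comps_iff_eq_comp_of[OF C w] by simp
qed

lemma finite_comps: "finite (comps n M l)"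
proof -
  have "gverts n \<subseteq> {..<n} \<times> UNIV" unfolding gverts_def by auto
  then show ?thesis unfolding comps_def by (simp add: finite_subset)
qed

section \<open>The compact SVD of the trail matrices\<close>

locale mixture_svd =
  fixes n L :: nat
    and M :: "nat \<Rightarrow> nat \<Rightarrow> nat \<Rightarrow> real"
    and s :: "nat \<Rightarrow> nat \<Rightarrow> real"
    and U V Sg :: "nat \<Rightarrow> real mat"
  assumes s_pos: "\<forall>l<L. \<forall>k<n. s l k > 0"
    and rank_P: "\<forall>k<n. mrank (Pmat n L M s k) = L"
    and rank_Mplus: "\<forall>k<n. mrank (Mplus n L M k) = L"
    and svd: "\<forall>k<n. compact_svd n L (Omat n L M s k) (U k) (Sg k) (V k)"
begin

abbreviation "P \<equiv> Pmat n L M s"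
abbreviation "Q \<equiv> Qmat n L M s"
abbreviation "Mp \<equiv> Mplus n L M"

definition "Delta k = mat_diag L (\<lambda>l. s l k)"
definition "Delta_inv k = mat_diag L (\<lambda>l. 1 / s l k)"
definition "Sigma_inv k = mat_diag L (\<lambda>l. 1 / Sg k $$ (l, l))"

definition "chgP k = Sigma_inv k * V k * transpose_mat (Mp k)"
definition "chgM k = U k * transpose_mat (P k)"

lemma factor_dims[simp]:
  "dim_row (P k) = L" "dim_col (P k) = n" "dim_row (Q k) = L" "dim_col (Q k) = n"
  "dim_row (Mp k) = L" "dim_col (Mp k) = n"
  "dim_row (Delta k) = L" "dim_col (Delta k) = L" "dim_row (Delta_inv k) = L" "dim_col (Delta_inv k) = L"
  "dim_row (Sigma_inv k) = L" "dim_col (Sigma_inv k) = L"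
  by (auto simp: Pmat_def Qmat_def Mplus_def Delta_def Delta_inv_def Sigma_inv_def mat_diag_def)

lemma transpose_Sigma_inv[simp]: "transpose_mat (Sigma_inv k) = Sigma_inv k"
  unfolding Sigma_inv_def by simp

lemma svd_dims:
  assumes "k < n"
  shows "dim_row (U k) = L" "dim_col (U k) = n" "dim_row (V k) = L" "dim_col (V k) = n"
    "dim_row (Sg k) = L" "dim_col (Sg k) = L"
  using svd assms unfolding compact_svd_def by auto

lemma chg_dims:
  assumes "k < n"
  shows "dim_row (chgP k) = L" "dim_col (chgP k) = L" "dim_row (chgM k) = L" "dim_col (chgM k) = L"
  using svd_dims[OF assms] by (auto simp: chgP_def chgM_def)

lemma Delta_inverse:
  assumes "k < n"
  shows "Delta k * Delta_inv k = 1\<^sub>m L" "Delta_inv k * Delta k = 1\<^sub>m L"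
  unfolding Delta_def Delta_inv_def by (rule mat_diag_inverse, use s_pos assms in fastforce)+

lemma Q_eq_Delta_mult_Mp: "Q k = Delta k * Mp k"
  by (auto simp: Delta_def Qmat_def Mplus_def mat_diag_mult_left[of _ L n])

lemma Omat_eq: "Omat n L M s k = transpose_mat (P k) * Mp k"
proof (rule eq_matI)
  fix a c assume "a < dim_row (transpose_mat (P k) * Mp k)" "c < dim_col (transpose_mat (P k) * Mp k)"
  then show "Omat n L M s k $$ (a, c) = (transpose_mat (P k) * Mp k) $$ (a, c)"
    by (subst index_mult_mat_sum[of _ _ _ _ L]) (auto simp: Pmat_def Mplus_def Omat_def)
qed (auto simp: Omat_def)

lemma Sg_Sigma_inv:
  assumes k: "k < n"
  shows "Sg k * Sigma_inv k = 1\<^sub>m L"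
proof -
  have diag: "Sg k = mat_diag L (\<lambda>l. Sg k $$ (l, l))"
    using svd k unfolding compact_svd_def by (intro eq_matI) (auto simp: mat_diag_def)
  have "\<And>l. l < L \<Longrightarrow> Sg k $$ (l, l) \<noteq> 0"
    using svd k unfolding compact_svd_def by fastforce
  then show ?thesis unfolding Sigma_inv_def by (subst (1) diag) (rule mat_diag_inverse(1))
qed

lemma svd_factors_eq:
  assumes k: "k < n"
  shows "U k = chgP k * P k" "Sg k * V k = chgM k * Mp k"
proof -
  note [simp] = svd_dims[OF k]
  from svd k have U_UT: "U k * transpose_mat (U k) = 1\<^sub>m L" and V_VT: "V k * transpose_mat (V k) = 1\<^sub>m L"
    and O_svd: "Omat n L M s k = transpose_mat (U k) * Sg k * V k"
    unfolding compact_svd_def by auto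
  have O_eq: "transpose_mat (U k) * (Sg k * V k) = transpose_mat (P k) * Mp k"
    using O_svd Omat_eq[of k] by (simp add: assoc_mult_mat_dim)
  have "transpose_mat (U k) = transpose_mat (U k) * (Sg k * V k) * transpose_mat (V k) * Sigma_inv k"
    using V_VT Sg_Sigma_inv[OF k] by (simp add: assoc_mult_mat_dim)
  then have "U k = transpose_mat (transpose_mat (P k) * Mp k * transpose_mat (V k) * Sigma_inv k)"
    unfolding O_eq by (metis transpose_transpose)
  then show "U k = chgP k * P k"
    unfolding chgP_def by (simp add: transpose_mult_mat_dim assoc_mult_mat_dim)
  have "Sg k * V k = U k * (transpose_mat (U k) * (Sg k * V k))"
    using U_UT by (simp add: assoc_mult_mat_dim[symmetric])
  then show "Sg k * V k = chgM k * Mp k"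
    unfolding O_eq chgM_def by (simp add: assoc_mult_mat_dim)
qed

lemma chg_inverse:
  assumes k: "k < n"
  shows "transpose_mat (chgP k) * chgM k = 1\<^sub>m L" "chgM k * transpose_mat (chgP k) = 1\<^sub>m L"
    "chgP k * transpose_mat (chgM k) = 1\<^sub>m L" "transpose_mat (chgM k) * chgP k = 1\<^sub>m L"
proof -
  note [simp] = svd_dims[OF k] chg_dims[OF k]
  have carriers: "P k \<in> carrier_mat L n" "Mp k \<in> carrier_mat L n"
    "transpose_mat (chgP k) * chgM k * Mp k \<in> carrier_mat L n" "1\<^sub>m L * Mp k \<in> carrier_mat L n"
    "transpose_mat (transpose_mat (chgP k) * chgM k) \<in> carrier_mat L L"
    "transpose_mat (1\<^sub>m L) \<in> carrier_mat L L"
    by (auto intro: carrier_matI)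
  have "transpose_mat (P k) * (transpose_mat (chgP k) * chgM k * Mp k)
      = transpose_mat (chgP k * P k) * (chgM k * Mp k)"
    by (simp add: transpose_mult_mat_dim assoc_mult_mat_dim)
  also have "\<dots> = transpose_mat (U k) * (Sg k * V k)" using svd_factors_eq[OF k] by simp
  also have "\<dots> = transpose_mat (P k) * (1\<^sub>m L * Mp k)"
    using svd k Omat_eq[of k] unfolding compact_svd_def by (simp add: assoc_mult_mat_dim)
  finally have PM_Mp: "transpose_mat (chgP k) * chgM k * Mp k = 1\<^sub>m L * Mp k"
    using transpose_mult_cancel_full_rank[OF carriers(1)] rank_P k carriers(3, 4) by blast
  have "transpose_mat (Mp k) * transpose_mat (transpose_mat (chgP k) * chgM k)
      = transpose_mat (Mp k) * transpose_mat (1\<^sub>m L)"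
    using arg_cong[OF PM_Mp, of transpose_mat] by (simp add: transpose_mult_mat_dim)
  then have "transpose_mat (transpose_mat (chgP k) * chgM k) = transpose_mat (1\<^sub>m L)"
    using transpose_mult_cancel_full_rank[OF carriers(2)] rank_Mplus k carriers(5, 6) by blast
  then show PM: "transpose_mat (chgP k) * chgM k = 1\<^sub>m L"
    by (metis transpose_transpose)
  show MP: "chgM k * transpose_mat (chgP k) = 1\<^sub>m L"
    by (rule mat_mult_left_right_inverse[OF _ _ PM]) (auto intro: carrier_matI)
  show "chgP k * transpose_mat (chgM k) = 1\<^sub>m L"
    using arg_cong[OF MP, of transpose_mat] by (simp add: transpose_mult_mat_dim)
  show "transpose_mat (chgM k) * chgP k = 1\<^sub>m L"
    using arg_cong[OF PM, of transpose_mat] by (simp add: transpose_mult_mat_dim)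
qed

end

section \<open>Recovering the component structure from the co-kernel\<close>

locale mixture_cokernel = mixture_svd +
  fixes B :: "real mat"
  assumes cc: "companion_connected n L M"
    and cokernel_A: "cokernel (shuffle n L (Pmat n L M s) (Qmat n L M s)) = xi_span n L M"
    and B_dim: "B \<in> carrier_mat (num_comps n L M) (2 * L * n)"
    and B_rows: "\<forall>q<num_comps n L M. row B q \<in> cokernel (shuffle n L U (\<lambda>k. Sg k * V k))"
    and B_indep: "mrank B = num_comps n L M"
begin

abbreviation "r \<equiv> num_comps n L M"

definition "comp_pairs = Sigma {..<L} (comps n M)"

lemma finite_comp_pairs: "finite comp_pairs" unfolding comp_pairs_def using finite_comps by auto

lemma card_comp_pairs: "card comp_pairs = r"
  unfolding comp_pairs_def num_comps_def using finite_comps by (simp add: card_SigmaI)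

definition "comp_enum = (SOME h. bij_betw h {..<r} comp_pairs)"

lemma bij_comp_enum: "bij_betw comp_enum {..<r} comp_pairs"
proof -
  obtain h where "bij_betw h {0..<card comp_pairs} comp_pairs"
    using ex_bij_betw_nat_finite[OF finite_comp_pairs] by blast
  then have "\<exists>h. bij_betw h {..<r} comp_pairs" using card_comp_pairs by (auto simp: lessThan_atLeast0)
  then show ?thesis unfolding comp_enum_def by (rule someI_ex)
qed

lemma comp_enum_in:
  "t < r \<Longrightarrow> fst (comp_enum t) < L \<and> snd (comp_enum t) \<in> comps n M (fst (comp_enum t))"
  using bij_betw_apply[OF bij_comp_enum, of t] unfolding comp_pairs_def by (cases "comp_enum t") auto

text \<open>The paper's \<open>\<Xi>\<^sub>b\<close>, with the components numbered by \<open>comp_enum\<close>; \<open>Xi_minus\<close> tests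
  \<open>b\<^sup>-\<close> instead of \<open>b\<^sup>+\<close>.\<close>
definition Xi :: "nat \<Rightarrow> real mat" where
  "Xi b = mat r L (\<lambda>(t, l). if fst (comp_enum t) = l \<and> (b, True) \<in> snd (comp_enum t) then 1 else 0)"

definition Xi_minus :: "nat \<Rightarrow> real mat" where
  "Xi_minus b = mat r L (\<lambda>(t, l). if fst (comp_enum t) = l \<and> (b, False) \<in> snd (comp_enum t) then 1 else 0)"

lemma Xi_dims[simp]:
  "dim_row (Xi b) = r" "dim_col (Xi b) = L" "dim_row (Xi_minus b) = r" "dim_col (Xi_minus b) = L"
  by (auto simp: Xi_def Xi_minus_def)

lemma Xi_minus_eq_Xi:
  assumes b: "b < n"
  shows "Xi_minus b = Xi b"
proof (rule eq_matI)
  fix t l assume t: "t < dim_row (Xi b)" and l: "l < dim_col (Xi b)"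
  have tr: "t < r" using t by simp
  have g: "gconn n M (fst (comp_enum t)) (b, False) (b, True)"
    using cc comp_enum_in[OF tr] b unfolding companion_connected_def by blast
  have "(b, False) \<in> snd (comp_enum t) \<longleftrightarrow> (b, True) \<in> snd (comp_enum t)"
    using gconn_imp_same_comp[OF conjunct2[OF comp_enum_in[OF tr]] g] b by simp
  then show "Xi_minus b $$ (t, l) = Xi b $$ (t, l)" using t l by (simp add: Xi_def Xi_minus_def)
qed auto

lemma sum_comp_enum_delta:
  assumes p: "p \<in> comp_pairs"
  shows "(\<Sum>t<r. if comp_enum t = p then 1 else (0::real)) = 1"
proof -
  have "(\<Sum>t<r. if comp_enum t = p then 1 else (0::real)) = (\<Sum>q\<in>comp_pairs. if q = p then 1 else 0)"
    using sum.reindex_bij_betw[OF bij_comp_enum, of "\<lambda>q. if q = p then 1 else (0::real)"] by simp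
  also have "\<dots> = 1" using p finite_comp_pairs by simp
  finally show ?thesis .
qed

lemma transpose_Xi_mult_Xi:
  assumes b: "b < n"
  shows "transpose_mat (Xi b) * Xi b = 1\<^sub>m L"
proof (rule eq_matI)
  fix l l' assume l: "l < dim_row (1\<^sub>m L :: real mat)" and l': "l' < dim_col (1\<^sub>m L :: real mat)"
  have "(transpose_mat (Xi b) * Xi b) $$ (l, l') = (\<Sum>t<r. Xi b $$ (t, l) * Xi b $$ (t, l'))"
    using l l' by (subst index_mult_mat_sum[of _ _ _ _ r]) auto
  also have "\<dots> = (\<Sum>t<r. if comp_enum t = (l, comp_of n M l (b, True)) \<and> l = l' then 1 else 0)"
  proof (rule sum.cong[OF refl])
    fix t assume "t \<in> {..<r}"
    then have tr: "t < r" by simp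
    obtain a C where et: "comp_enum t = (a, C)" by (cases "comp_enum t")
    have aL: "a < L" and Cc: "C \<in> comps n M a" using comp_enum_in[OF tr] et by auto
    have iff: "(b, True) \<in> C \<longleftrightarrow> C = comp_of n M a (b, True)"
      using mem_comps_iff_eq_comp_of[OF Cc] b by simp
    have mem: "(b, True) \<in> comp_of n M a (b, True)" using comp_of_in_comps[of "(b, True)" n M a] b by simp
    show "Xi b $$ (t, l) * Xi b $$ (t, l')
        = (if comp_enum t = (l, comp_of n M l (b, True)) \<and> l = l' then 1 else 0)"
    proof (cases "(b, True) \<in> C")
      case True
      then show ?thesis using tr l l' et iff by (auto simp: Xi_def)
    next
      case False
      then have "comp_enum t \<noteq> (l, comp_of n M l (b, True))" using et mem by auto
      then show ?thesis using tr l l' et False by (auto simp: Xi_def)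
    qed
  qed
  also have "\<dots> = (if l = l' then 1 else 0)"
  proof (cases "l = l'")
    case True
    have "(l, comp_of n M l (b, True)) \<in> comp_pairs"
      unfolding comp_pairs_def using comp_of_in_comps[of "(b, True)" n M l] b l by auto
    then show ?thesis using True sum_comp_enum_delta by simp
  next
    case False then show ?thesis by simp
  qed
  finally show "(transpose_mat (Xi b) * Xi b) $$ (l, l') = 1\<^sub>m L $$ (l, l')" using l l' by simp
qed auto

lemma Xi_eq_if_gconn:
  assumes i: "i < n" and j: "j < n" and g: "\<forall>l<L. gconn n M l (i, True) (j, True)"
  shows "Xi i = Xi j"
proof (rule eq_matI)
  fix t l assume t: "t < dim_row (Xi j)" and l: "l < dim_col (Xi j)"
  have tr: "t < r" using t by simp
  have "(i, True) \<in> snd (comp_enum t) \<longleftrightarrow> (j, True) \<in> snd (comp_enum t)"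
    using gconn_imp_same_comp[OF conjunct2[OF comp_enum_in[OF tr]]] g comp_enum_in[OF tr] i j by simp
  then show "Xi i $$ (t, l) = Xi j $$ (t, l)" using t l by (simp add: Xi_def)
qed auto

lemma gconn_if_Xi_factors:
  assumes i: "i < n" and j: "j < n" and W: "W \<in> carrier_mat L L" and eq: "Xi j = Xi i * W"
  shows "\<forall>l<L. gconn n M l (i, True) (j, True)"
proof (intro allI impI)
  fix l assume l: "l < L"
  let ?p = "(l, comp_of n M l (j, True))"
  have p: "?p \<in> comp_pairs" unfolding comp_pairs_def using comp_of_in_comps[of "(j, True)" n M l] j l by auto
  then obtain t where tr: "t < r" and et: "comp_enum t = ?p"
    using bij_comp_enum unfolding bij_betw_def by (metis imageE lessThan_iff)
  have x1: "Xi j $$ (t, l) = 1" using tr l et comp_of_in_comps[of "(j, True)" n M l] j by (simp add: Xi_def)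
  have "(Xi i * W) $$ (t, l) = 1" using x1 eq by metis
  then have s1: "(\<Sum>m<L. Xi i $$ (t, m) * W $$ (m, l)) = 1"
    using tr l W by (subst (asm) index_mult_mat_sum[of _ _ _ _ L]) auto
  show "gconn n M l (i, True) (j, True)"
  proof (rule ccontr)
    assume ng: "\<not> gconn n M l (i, True) (j, True)"
    have "(i, True) \<notin> comp_of n M l (j, True)"
      using ng gconn_sym unfolding comp_of_def by blast
    then have "\<forall>m<L. Xi i $$ (t, m) = 0" using tr et by (simp add: Xi_def)
    then have "(\<Sum>m<L. Xi i $$ (t, m) * W $$ (m, l)) = 0" by simp
    then show False using s1 by simp
  qed
qed


definition "Yb k = Yblk n L B k"
definition "Zb k = Zblk n L B k"
definition "W_plus k = Yb k * chgP k"
definition "W_minus k = Zb k * chgM k * Delta_inv k"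

lemma B_dims[simp]: "dim_row B = r" "dim_col B = 2 * L * n" using B_dim by auto

lemma Yb_Zb_dims[simp]: "dim_row (Yb k) = r" "dim_col (Yb k) = L" "dim_row (Zb k) = r" "dim_col (Zb k) = L"
  by (auto simp: Yb_def Zb_def Yblk_def Zblk_def)

lemma W_dims:
  assumes "k < n"
  shows "dim_row (W_plus k) = r" "dim_col (W_plus k) = L" "dim_row (W_minus k) = r" "dim_col (W_minus k) = L"
  using chg_dims[OF assms] by (auto simp: W_plus_def W_minus_def)

lemma W_plus_mult_P: "b < n \<Longrightarrow> W_plus b * P b = Yb b * U b"
  unfolding W_plus_def using svd_factors_eq(1)[of b] chg_dims[of b] by (simp add: assoc_mult_mat_dim)

lemma W_minus_mult_Q:
  assumes a: "a < n"
  shows "W_minus a * Q a = Zb a * (Sg a * V a)"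
proof -
  have "W_minus a * Q a = Zb a * (chgM a * ((Delta_inv a * Delta a) * Mp a))"
    unfolding W_minus_def Q_eq_Delta_mult_Mp using chg_dims[OF a] by (simp add: assoc_mult_mat_dim)
  also have "\<dots> = Zb a * (Sg a * V a)" using Delta_inverse[OF a] svd_factors_eq(2)[OF a] by simp
  finally show ?thesis .
qed

definition "lifted = mat r (2 * L * n) (\<lambda>(q, k). if k < L * n then W_plus (k div L) $$ (q, k mod L)
   else W_minus ((k - L * n) div L) $$ (q, (k - L * n) mod L))"

lemma lifted_dims[simp]: "dim_row lifted = r" "dim_col lifted = 2 * L * n"
  by (simp_all add: lifted_def)

lemma lifted_blocks:
  assumes k: "k < n"
  shows "Yblk n L lifted k = W_plus k" "Zblk n L lifted k = W_minus k"
proof (rule_tac [!] eq_matI)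
  fix q l assume "q < dim_row (W_plus k)" "l < dim_col (W_plus k)"
  then have q: "q < r" and l: "l < L" using W_dims[OF k] by auto
  show "Yblk n L lifted k $$ (q, l) = W_plus k $$ (q, l)"
    using Yblk_index[of q lifted l L n k] block_index_less[OF k l] q l
    by (simp add: lifted_def block_div_mod)
next
  fix q l assume "q < dim_row (W_minus k)" "l < dim_col (W_minus k)"
  then have q: "q < r" and l: "l < L" using W_dims[OF k] by auto
  show "Zblk n L lifted k $$ (q, l) = W_minus k $$ (q, l)"
    using Zblk_index[of q lifted l L n k] shuffle_row_index_less(2)[OF k l] q l
    by (simp add: lifted_def block_div_mod)
qed (use W_dims[OF k] in auto)

lemma lifted_rows_in_cokernel:
  assumes q: "q < r"
  shows "row lifted q \<in> cokernel (shuffle n L P Q)"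
proof -
  have U: "\<And>b. b < n \<Longrightarrow> U b \<in> carrier_mat L n"
    and SV: "\<And>a. a < n \<Longrightarrow> Sg a * V a \<in> carrier_mat L n"
    using svd_dims by (auto intro!: carrier_matI)
  have PQ: "\<And>b. b < n \<Longrightarrow> P b \<in> carrier_mat L n" "\<And>a. a < n \<Longrightarrow> Q a \<in> carrier_mat L n"
    by (auto intro!: carrier_matI)
  have lifted: "lifted \<in> carrier_mat r (2 * L * n)" by (auto intro!: carrier_matI)
  have "\<forall>q<r. \<forall>a<n. \<forall>b<n. (Yb b * U b) $$ (q, a) = (Zb a * (Sg a * V a)) $$ (q, b)"
    using rows_in_cokernel_shuffle_iff[where P=U and Q="\<lambda>k. Sg k * V k", OF B_dim U SV] B_rows
    unfolding Yb_def Zb_def by blast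
  then have "\<forall>q<r. \<forall>a<n. \<forall>b<n. (Yblk n L lifted b * P b) $$ (q, a) = (Zblk n L lifted a * Q a) $$ (q, b)"
    by (simp add: lifted_blocks W_plus_mult_P W_minus_mult_Q)
  then show ?thesis using rows_in_cokernel_shuffle_iff[where P=P and Q=Q, OF lifted PQ] q by blast
qed

definition "xi_comb S c = vec (2 * L * n) (\<lambda>k. \<Sum>x\<in>S. c x * xi n L (fst x) (snd x) $ k)"

definition "xi_coeffs q = (SOME p. fst p \<subseteq> comp_pairs \<and> row lifted q = xi_comb (fst p) (snd p))"

lemma xi_coeffs:
  assumes q: "q < r"
  shows "fst (xi_coeffs q) \<subseteq> comp_pairs" "row lifted q = xi_comb (fst (xi_coeffs q)) (snd (xi_coeffs q))"
proof -
  have "row lifted q \<in> xi_span n L M" using lifted_rows_in_cokernel[OF q] cokernel_A by simp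
  then obtain S c where "S \<subseteq> {(l, C). l < L \<and> C \<in> comps n M l}" "row lifted q = xi_comb S c"
    unfolding xi_span_def xi_comb_def by blast
  then have "\<exists>p. fst p \<subseteq> comp_pairs \<and> row lifted q = xi_comb (fst p) (snd p)"
    unfolding comp_pairs_def by (intro exI[of _ "(S, c)"]) auto
  from someI_ex[OF this] show "fst (xi_coeffs q) \<subseteq> comp_pairs"
    "row lifted q = xi_comb (fst (xi_coeffs q)) (snd (xi_coeffs q))"
    unfolding xi_coeffs_def by auto
qed

definition R :: "real mat" where
  "R = mat r r (\<lambda>(q, t). if comp_enum t \<in> fst (xi_coeffs q) then snd (xi_coeffs q) (comp_enum t) else 0)"

lemma R_dims[simp]: "dim_row R = r" "dim_col R = r" by (auto simp: R_def)

lemma lifted_row_eq_R_combination: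
  assumes q: "q < r" and k: "k < 2 * L * n"
  shows "row lifted q $ k = (\<Sum>t<r. R $$ (q, t) * xi n L (fst (comp_enum t)) (snd (comp_enum t)) $ k)"
proof -
  let ?S = "fst (xi_coeffs q)" and ?c = "snd (xi_coeffs q)"
  have "row lifted q $ k = (\<Sum>p\<in>?S. ?c p * xi n L (fst p) (snd p) $ k)"
    using xi_coeffs(2)[OF q] k by (simp add: xi_comb_def)
  also have "\<dots> = (\<Sum>p\<in>comp_pairs. (if p \<in> ?S then ?c p else 0) * xi n L (fst p) (snd p) $ k)"
    using xi_coeffs(1)[OF q] finite_comp_pairs by (intro sum.mono_neutral_cong_left) auto
  also have "\<dots> = (\<Sum>t<r. R $$ (q, t) * xi n L (fst (comp_enum t)) (snd (comp_enum t)) $ k)"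
    using sum.reindex_bij_betw[OF bij_comp_enum,
        of "\<lambda>p. (if p \<in> ?S then ?c p else 0) * xi n L (fst p) (snd p) $ k"] q
    by (simp add: R_def)
  finally show ?thesis .
qed

lemma W_plus_eq:
  assumes b: "b < n"
  shows "W_plus b = R * Xi b"
proof (rule eq_matI)
  fix q l assume "q < dim_row (R * Xi b)" "l < dim_col (R * Xi b)"
  then have q: "q < r" and l: "l < L" by auto
  have bl: "b * L + l < 2 * L * n" using shuffle_row_index_less(1)[OF b l] .
  have "W_plus b $$ (q, l) = row lifted q $ (b * L + l)"
    using Yblk_index[of q lifted l L n b] lifted_blocks(1)[OF b] q l bl by (simp add: lifted_def)
  also have "\<dots> = (\<Sum>t<r. R $$ (q, t) * Xi b $$ (t, l))"
    unfolding lifted_row_eq_R_combination[OF q bl]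
    using block_index_less[OF b l] l by (intro sum.cong refl) (auto simp: xi_def Xi_def)
  also have "\<dots> = (R * Xi b) $$ (q, l)" using q l by (subst index_mult_mat_sum[of _ _ _ _ r]) auto
  finally show "W_plus b $$ (q, l) = (R * Xi b) $$ (q, l)" .
qed (use W_dims[OF b] in auto)

lemma W_minus_eq:
  assumes a: "a < n"
  shows "W_minus a = R * Xi a"
proof (rule eq_matI)
  fix q l assume "q < dim_row (R * Xi a)" "l < dim_col (R * Xi a)"
  then have q: "q < r" and l: "l < L" by auto
  have al: "L * n + a * L + l < 2 * L * n" using shuffle_row_index_less(2)[OF a l] .
  have "W_minus a $$ (q, l) = row lifted q $ (L * n + a * L + l)"
    using Zblk_index[of q lifted l L n a] lifted_blocks(2)[OF a] q l al by (simp add: lifted_def)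
  also have "\<dots> = (\<Sum>t<r. R $$ (q, t) * Xi_minus a $$ (t, l))"
    unfolding lifted_row_eq_R_combination[OF q al]
    using block_index_less[OF a l] l by (intro sum.cong refl) (auto simp: xi_def Xi_minus_def)
  also have "\<dots> = (R * Xi a) $$ (q, l)"
    unfolding Xi_minus_eq_Xi[OF a] using q l by (subst index_mult_mat_sum[of _ _ _ _ r]) auto
  finally show "W_minus a $$ (q, l) = (R * Xi a) $$ (q, l)" .
qed (use W_dims[OF a] in auto)

lemma Yb_eq:
  assumes k: "k < n"
  shows "Yb k = R * (Xi k * transpose_mat (chgM k))"
proof -
  note [simp] = chg_dims[OF k]
  have "Yb k = Yb k * (chgP k * transpose_mat (chgM k))" using chg_inverse(3)[OF k] by simp
  also have "\<dots> = W_plus k * transpose_mat (chgM k)"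
    unfolding W_plus_def by (simp add: assoc_mult_mat_dim)
  also have "\<dots> = R * (Xi k * transpose_mat (chgM k))"
    unfolding W_plus_eq[OF k] by (simp add: assoc_mult_mat_dim)
  finally show ?thesis .
qed

lemma Zb_eq:
  assumes k: "k < n"
  shows "Zb k = R * (Xi k * Delta k * transpose_mat (chgP k))"
proof -
  note [simp] = chg_dims[OF k]
  have "Zb k = Zb k * (chgM k * ((Delta_inv k * Delta k) * transpose_mat (chgP k)))"
    using chg_inverse(2)[OF k] Delta_inverse(2)[OF k] by simp
  also have "\<dots> = W_minus k * Delta k * transpose_mat (chgP k)"
    unfolding W_minus_def by (simp add: assoc_mult_mat_dim)
  also have "\<dots> = R * (Xi k * Delta k * transpose_mat (chgP k))"
    unfolding W_minus_eq[OF k] by (simp add: assoc_mult_mat_dim)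
  finally show ?thesis .
qed

lemma Zb_mult_transpose_Yb:
  assumes k: "k < n"
  shows "Zb k * transpose_mat (Yb k) = (R * Xi k) * Delta k * transpose_mat (R * Xi k)"
proof -
  note [simp] = chg_dims[OF k]
  have "Zb k * transpose_mat (Yb k)
      = R * (Xi k * (Delta k * (transpose_mat (chgP k) * chgM k * (transpose_mat (Xi k) * transpose_mat R))))"
    unfolding Zb_eq[OF k] Yb_eq[OF k] by (simp add: assoc_mult_mat_dim transpose_mult_mat_dim)
  also have "\<dots> = (R * Xi k) * Delta k * transpose_mat (R * Xi k)"
    using chg_inverse(1)[OF k] by (simp add: assoc_mult_mat_dim transpose_mult_mat_dim)
  finally show ?thesis .
qed

lemma B_eq_R_mult:
  obtains G where "G \<in> carrier_mat r (2 * L * n)" "B = R * G"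
proof -
  define G where "G = mat r (2 * L * n) (\<lambda>(t, k).
    if k < L * n then (Xi (k div L) * transpose_mat (chgM (k div L))) $$ (t, k mod L)
    else (Xi ((k - L * n) div L) * Delta ((k - L * n) div L) * transpose_mat (chgP ((k - L * n) div L)))
      $$ (t, (k - L * n) mod L))"
  have G: "G \<in> carrier_mat r (2 * L * n)" unfolding G_def by simp
  have "B = R * G"
  proof (rule eq_matI)
    fix q k assume "q < dim_row (R * G)" "k < dim_col (R * G)"
    then have q: "q < r" and k: "k < 2 * L * n" using G by auto
    have RG: "(R * G) $$ (q, k) = row R q \<bullet> col G k" using q k G by simp
    from k show "B $$ (q, k) = (R * G) $$ (q, k)"
    proof (cases rule: two_block_index_cases)
      case (plus b l)
      then have "col G k = col (Xi b * transpose_mat (chgM b)) l"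
        using block_index_less[OF plus(1, 2)] chg_dims[OF plus(1)] by (intro eq_vecI) (auto simp: G_def)
      moreover have "B $$ (q, k) = (R * (Xi b * transpose_mat (chgM b))) $$ (q, l)"
        using Yblk_index[of q B l L n b] Yb_eq[OF plus(1), unfolded Yb_def] q plus by simp
      ultimately show ?thesis using plus q chg_dims[OF plus(1)] unfolding RG by simp
    next
      case (minus a l)
      then have "col G k = col (Xi a * Delta a * transpose_mat (chgP a)) l"
        using block_index_less[OF minus(1, 2)] chg_dims[OF minus(1)] by (intro eq_vecI) (auto simp: G_def)
      moreover have "B $$ (q, k) = (R * (Xi a * Delta a * transpose_mat (chgP a))) $$ (q, l)"
        using Zblk_index[of q B l L n a] Zb_eq[OF minus(1), unfolded Zb_def] q minus by simp
      ultimately show ?thesis using minus q chg_dims[OF minus(1)] unfolding RG by simp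
    qed
  qed (use G in auto)
  then show ?thesis using G that by blast
qed

lemma mrank_R: "mrank R = r"
proof -
  obtain G where G: "G \<in> carrier_mat r (2 * L * n)" and B_RG: "B = R * G" using B_eq_R_mult .
  have R: "R \<in> carrier_mat r r" by auto
  have "r = mrank (R * G)" unfolding B_RG[symmetric] using B_indep by simp
  also have "\<dots> \<le> mrank R" by (rule mrank_mult_le[OF R G])
  finally show ?thesis using mrank_le_ncols[OF R] by simp
qed

lemma R_left_inverse:
  obtains Rl where "Rl \<in> carrier_mat r r" "Rl * R = 1\<^sub>m r"
proof -
  have R: "R \<in> carrier_mat r r" by auto
  obtain Ri where "Ri \<in> carrier_mat r r" "Ri * R = 1\<^sub>m r"
    using inj_imp_invertible_mat[OF R mrank_eq_ncols_imp_inj[OF R mrank_R]] by blast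
  then show ?thesis by (rule that)
qed

lemma mrank_R_mult_Xi:
  assumes b: "b < n"
  shows "mrank (R * Xi b) = L"
proof (rule inj_imp_mrank_eq_ncols)
  show RXi: "R * Xi b \<in> carrier_mat r L" by (auto intro: carrier_matI)
  fix v assume v: "v \<in> carrier_vec L" and z: "(R * Xi b) *\<^sub>v v = 0\<^sub>v r"
  obtain Rl where Rl: "Rl \<in> carrier_mat r r" "Rl * R = 1\<^sub>m r" using R_left_inverse .
  have "Xi b *\<^sub>v v = (Rl * (R * Xi b)) *\<^sub>v v" using Rl by (simp add: assoc_mult_mat_dim[symmetric])
  also have "\<dots> = 0\<^sub>v r" using z Rl RXi v by (simp add: assoc_mult_mat_vec[of _ r r _ L])
  finally have Xiv: "Xi b *\<^sub>v v = 0\<^sub>v r" .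
  have "v = (transpose_mat (Xi b) * Xi b) *\<^sub>v v" using transpose_Xi_mult_Xi[OF b] v by simp
  also have "\<dots> = transpose_mat (Xi b) *\<^sub>v (Xi b *\<^sub>v v)"
    by (rule assoc_mult_mat_vec) (use v in \<open>auto intro: carrier_matI\<close>)
  finally show "v = 0\<^sub>v L" unfolding Xiv by simp
qed

lemma same_comps_iff_pinv_criterion:
  assumes i: "i < n" and j: "j < n"
  shows "(\<forall>l<L. gconn n M l (i, True) (j, True)) \<longleftrightarrow> pinv_criterion L
    (Zblk n L B i * transpose_mat (Yblk n L B i)) (Zblk n L B j * transpose_mat (Yblk n L B j))"
proof -
  define C where "C b = R * Xi b * Delta b * transpose_mat (R * Xi b)" for b
  have RXi: "\<And>b. R * Xi b \<in> carrier_mat r L" by (auto intro: carrier_matI)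
  have Delta_carrier: "\<And>b. Delta b \<in> carrier_mat L L" "\<And>b. Delta_inv b \<in> carrier_mat L L"
    by (auto intro: carrier_matI)
  have C_eq: "Zblk n L B b * transpose_mat (Yblk n L B b) = C b" if "b < n" for b
    using Zb_mult_transpose_Yb[OF that] unfolding Zb_def Yb_def C_def .
  have "pinv_criterion L (C i) (C j)" if "\<forall>l<L. gconn n M l (i, True) (j, True)"
  proof -
    have "Xi j = Xi i" using Xi_eq_if_gconn[OF i j that] by simp
    then show ?thesis
      using pinv_criterion_same_factor[OF RXi mrank_R_mult_Xi[OF i] Delta_carrier Delta_carrier
          Delta_inverse[OF i] Delta_inverse[OF j]] unfolding C_def by simp
  qed
  moreover have "\<forall>l<L. gconn n M l (i, True) (j, True)" if crit: "pinv_criterion L (C i) (C j)"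
  proof -
    obtain W where W: "W \<in> carrier_mat L L" and RXi_eq: "R * Xi j = R * Xi i * W"
      using pinv_criterion_imp_factors_through[OF RXi RXi mrank_R_mult_Xi[OF i] mrank_R_mult_Xi[OF j]
          Delta_carrier Delta_carrier Delta_inverse[OF i] Delta_inverse[OF j] crit[unfolded C_def]] by blast
    obtain Rl where Rl: "Rl \<in> carrier_mat r r" "Rl * R = 1\<^sub>m r" using R_left_inverse .
    have "Xi j = Rl * (R * Xi j)" using Rl by (simp add: assoc_mult_mat_dim[symmetric])
    also have "\<dots> = Xi i * W" unfolding RXi_eq using Rl W by (simp add: assoc_mult_mat_dim[symmetric])
    finally show ?thesis using gconn_if_Xi_factors[OF i j W] by simp
  qed
  ultimately show ?thesis unfolding C_eq[OF i] C_eq[OF j] by blast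
qed

end

theorem lemma2:
  fixes n L :: nat
    and M :: "nat \<Rightarrow> nat \<Rightarrow> nat \<Rightarrow> real"
    and s :: "nat \<Rightarrow> nat \<Rightarrow> real"
    and U V Sg :: "nat \<Rightarrow> real mat"
    and B :: "real mat"
    and i j :: nat
  assumes mix: "mixture n L M s"
    and s_pos: "\<forall>l<L. \<forall>k<n. s l k > 0"
    and rank_P: "\<forall>k<n. mrank (Pmat n L M s k) = L"
    and rank_Mplus: "\<forall>k<n. mrank (Mplus n L M k) = L"
    and cc: "companion_connected n L M"
    and cokernel_A: "cokernel (shuffle n L (Pmat n L M s) (Qmat n L M s)) = xi_span n L M"
    and svd: "\<forall>k<n. compact_svd n L (Omat n L M s k) (U k) (Sg k) (V k)"
    and B_dim: "B \<in> carrier_mat (num_comps n L M) (2 * L * n)"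
    and B_rows: "\<forall>q<num_comps n L M. row B q \<in> cokernel (shuffle n L U (\<lambda>k. Sg k * V k))"
    and B_indep: "mrank B = num_comps n L M"
    and B_span: "\<forall>v \<in> cokernel (shuffle n L U (\<lambda>k. Sg k * V k)).
                   \<exists>c \<in> carrier_vec (num_comps n L M). v = transpose_mat B *\<^sub>v c"
    and i_lt: "i < n" and j_lt: "j < n"
  shows "(\<forall>l<L. gconn n M l (i, True) (j, True)) \<longleftrightarrow>
     (let Ci = Zblk n L B i * transpose_mat (Yblk n L B i);
          Cj = Zblk n L B j * transpose_mat (Yblk n L B j)
      in mrank (pinv Cj * Ci) = L \<and> pinv Cj * Ci = pinv (pinv Ci * Cj))"
proof -
  interpret mixture_cokernel n L M s U V Sg B
    using s_pos rank_P rank_Mplus svd cc cokernel_A B_dim B_rows B_indep by unfold_locales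
  show ?thesis
    using same_comps_iff_pinv_criterion[OF i_lt j_lt] unfolding pinv_criterion_def Let_def .
qed

end
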